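(* Let $\mathcal{G}$ be a compact group acting orthogonally on $\mathbb{R}^d$. Let $\gamma$ be a coupling (joint law) of $(Z_0,Z_1)$ on $\mathbb{R}^d\times\mathbb{R}^d$ with finite second moments that is diagonal-invariant, i.e. $(g,g)_{\#}\gamma=\gamma$ for all $g\in\mathcal{G}$. For fixed $t\in[0,1]$ let $Z_t=(1-t)Z_0+tZ_1$, $U:=Z_1-Z_0$, and for measurable $v:\mathbb{R}^d\to\mathbb{R}^d$ let $\mathcal{L}_t(v):=\mathbb{E}[\|v(Z_t)-U\|^2]$. Then the Bayes regressor $v^\star(z)=\mathbb{E}[U\mid Z_t=z]$ is $\mathcal{G}$-equivariant: $v^\star(g\cdot z)=g\cdot v^\star(z)$ for all $g\in\mathcal{G}$. Consequently, with $\mathcal{H}_{\mathrm{eq}}:=\{v:\ v(g\cdot z)=g\cdot v(z)\ \forall g,z\}$, $$\inf_{v\in\mathcal{H}_{\mathrm{eq}}}\mathcal{L}_t(v)=\inf_v\mathcal{L}_t(v)=\mathbb{E}\big[\mathrm{Var}(U\mid Z_t)\big].$$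
   Context: $\mathrm{Var}(U\mid Z_t)=\mathbb{E}[\|U-\mathbb{E}[U\mid Z_t]\|^2\mid Z_t]$; the infimum without subscript is over all measurable $v$. Since conditional expectations are defined almost everywhere, equivariance of $v^\star$ is understood for a suitable version of $v^\star$ (equivalently, for each $g$, for almost every $z$ with respect to the law of $Z_t$). *)

theory Defs
  imports "HOL-Analysis.Analysis" "HOL-Probability.Probability"
begin

text \<open>Compact group acting orthogonally on R^d, represented by its image:
  a compact subgroup of the orthogonal group O(d), acting by g *v z.\<close>
definition compact_orth_group :: "(real^'n^'n) set \<Rightarrow> bool" where
  "compact_orth_group G \<longleftrightarrow>
     (\<forall>g\<in>G. orthogonal_matrix g) \<and> mat 1 \<in> G \<and>
     (\<forall>g\<in>G. \<forall>h\<in>G. g ** h \<in> G) \<and> (\<forall>g\<in>G. transpose g \<in> G) \<and> compact G"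

definition cond_exp_vec :: "'a measure \<Rightarrow> 'a measure \<Rightarrow> ('a \<Rightarrow> real^'n) \<Rightarrow> 'a \<Rightarrow> real^'n" where
  "cond_exp_vec M F U = (\<lambda>\<omega>. \<chi> i. real_cond_exp M F (\<lambda>x. U x $ i) \<omega>)"

definition Zt :: "real \<Rightarrow> ((real^'n) \<times> (real^'n)) \<Rightarrow> real^'n" where
  "Zt t = (\<lambda>(x, y). (1 - t) *\<^sub>R x + t *\<^sub>R y)"

definition Udisp :: "((real^'n) \<times> (real^'n)) \<Rightarrow> real^'n" where
  "Udisp = (\<lambda>(x, y). y - x)"

definition sigZ :: "((real^'n) \<times> (real^'n)) measure \<Rightarrow> real \<Rightarrow> ((real^'n) \<times> (real^'n)) measure" where
  "sigZ \<gamma> t = vimage_algebra (space \<gamma>) (Zt t) borel"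

definition bayes_regressor :: "((real^'n) \<times> (real^'n)) measure \<Rightarrow> real \<Rightarrow> (real^'n \<Rightarrow> real^'n) \<Rightarrow> bool" where
  "bayes_regressor \<gamma> t v \<longleftrightarrow> v \<in> borel_measurable borel \<and>
     (AE \<omega> in \<gamma>. v (Zt t \<omega>) = cond_exp_vec \<gamma> (sigZ \<gamma> t) Udisp \<omega>)"

definition loss :: "((real^'n) \<times> (real^'n)) measure \<Rightarrow> real \<Rightarrow> (real^'n \<Rightarrow> real^'n) \<Rightarrow> ennreal" where
  "loss \<gamma> t v = (\<integral>\<^sup>+ \<omega>. ennreal ((norm (v (Zt t \<omega>) - Udisp \<omega>))\<^sup>2) \<partial>\<gamma>)"

definition cond_var :: "((real^'n) \<times> (real^'n)) measure \<Rightarrow> real \<Rightarrow> ((real^'n) \<times> (real^'n)) \<Rightarrow> real" where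
  "cond_var \<gamma> t = real_cond_exp \<gamma> (sigZ \<gamma> t)
     (\<lambda>\<omega>. (norm (Udisp \<omega> - cond_exp_vec \<gamma> (sigZ \<gamma> t) Udisp \<omega>))\<^sup>2)"

definition equivariant :: "(real^'n^'n) set \<Rightarrow> (real^'n \<Rightarrow> real^'n) \<Rightarrow> bool" where
  "equivariant G v \<longleftrightarrow> (\<forall>g\<in>G. \<forall>z. v (g *v z) = g *v v z)"

end

theory Submission
  imports Defs
begin

(* The loss splits by the tower property as
     L_t(v) = E |v(Z_t) - v*(Z_t)|^2 + E [Var(U | Z_t)],
   so the unconstrained infimum is E [Var(U | Z_t)], attained at v*.
   Diagonal invariance makes (Z_t, U) and (g Z_t, g U) equal in law, so g^T v*(g z) has the
   defining property of E[U | Z_t = z]; uniqueness of conditional expectations gives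
   v*(g z) = g v*(z) for almost every z.
   Equivariance in H_eq is required for every z, so v* itself need not belong to H_eq. Its
   averages over balls, v_r(z) = mu(B(z,r))^-1 * (integral of v* over B(z,r) w.r.t. mu), where
   mu is the law of Z_t, are exactly equivariant, because mu is invariant and g is an isometry.
   A covering of each ball by boundedly many cells of diameter < r shows that averaging is
   bounded on L^2(mu) uniformly in r; since v_r -> v pointwise for bounded continuous v, and
   these are dense in L^2(mu), v_r -> v* in L^2(mu). Hence the equivariant infimum is also
   E [Var(U | Z_t)]. *)

section \<open>Square-integrable functions\<close>

lemma integrable_mult_of_square_integrable:
  fixes f g :: "'a \<Rightarrow> real"
  assumes [measurable]: "f \<in> borel_measurable M" "g \<in> borel_measurable M"
    and "integrable M (\<lambda>x. (f x)\<^sup>2)" "integrable M (\<lambda>x. (g x)\<^sup>2)"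
  shows "integrable M (\<lambda>x. f x * g x)"
proof (rule Bochner_Integration.integrable_bound)
  show "integrable M (\<lambda>x. (f x)\<^sup>2 + (g x)\<^sup>2)"
    using assms(3,4) by simp
  have "\<bar>a * b\<bar> \<le> a\<^sup>2 + b\<^sup>2" for a b :: real
  proof -
    have "2 * (\<bar>a\<bar> * \<bar>b\<bar>) \<le> a\<^sup>2 + b\<^sup>2"
      using sum_squares_bound[of "\<bar>a\<bar>" "\<bar>b\<bar>"] by (simp add: mult.assoc)
    moreover have "0 \<le> \<bar>a\<bar> * \<bar>b\<bar>" by simp
    ultimately show ?thesis unfolding abs_mult by linarith
  qed
  then show "AE x in M. norm (f x * g x) \<le> norm ((f x)\<^sup>2 + (g x)\<^sup>2)"
    by simp
qed measurable

lemma square_integrable_add_diff: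
  fixes f g :: "'a \<Rightarrow> real"
  assumes [measurable]: "f \<in> borel_measurable M" "g \<in> borel_measurable M"
    and "integrable M (\<lambda>x. (f x)\<^sup>2)" "integrable M (\<lambda>x. (g x)\<^sup>2)"
  shows "integrable M (\<lambda>x. (f x + g x)\<^sup>2)" and "integrable M (\<lambda>x. (f x - g x)\<^sup>2)"
  using assms(3,4) integrable_mult_of_square_integrable[OF assms]
  by (simp_all add: power2_sum power2_diff mult.assoc)

lemma norm_diff_square_le:
  fixes a b :: "'a::real_normed_vector"
  shows "(norm (a - b))\<^sup>2 \<le> 2 * (norm a)\<^sup>2 + 2 * (norm b)\<^sup>2"
proof -
  have "(norm (a - b))\<^sup>2 \<le> (norm a + norm b)\<^sup>2"
    by (intro power_mono norm_triangle_ineq4) simp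
  also have "\<dots> \<le> 2 * (norm a)\<^sup>2 + 2 * (norm b)\<^sup>2"
    using sum_squares_ge_zero[of "norm a - norm b" 0] by (simp add: power2_eq_square algebra_simps)
  finally show ?thesis .
qed

lemma integrable_norm_diff_square:
  fixes f g :: "'a \<Rightarrow> 'b::{banach, second_countable_topology}"
  assumes [measurable]: "f \<in> borel_measurable M" "g \<in> borel_measurable M"
    and "integrable M (\<lambda>x. (norm (f x))\<^sup>2)" "integrable M (\<lambda>x. (norm (g x))\<^sup>2)"
  shows "integrable M (\<lambda>x. (norm (f x - g x))\<^sup>2)"
proof (rule Bochner_Integration.integrable_bound)
  show "integrable M (\<lambda>x. 2 * (norm (f x))\<^sup>2 + 2 * (norm (g x))\<^sup>2)"
    using assms(3,4) by simp
  show "AE x in M. norm ((norm (f x - g x))\<^sup>2) \<le> norm (2 * (norm (f x))\<^sup>2 + 2 * (norm (g x))\<^sup>2)"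
    by (intro AE_I2) (simp add: norm_diff_square_le)
qed measurable

lemma (in finite_measure) integrable_of_norm_square:
  fixes f :: "'a \<Rightarrow> 'b::{banach, second_countable_topology}"
  assumes [measurable]: "f \<in> borel_measurable M" and "integrable M (\<lambda>x. (norm (f x))\<^sup>2)"
  shows "integrable M f"
  using square_integrable_imp_integrable[of "\<lambda>x. norm (f x)"] assms by (simp add: integrable_norm_iff)

lemma borel_measurable_vec_nth[measurable (raw)]:
  fixes f :: "'a \<Rightarrow> real^'n"
  shows "f \<in> borel_measurable M \<Longrightarrow> (\<lambda>x. f x $ i) \<in> borel_measurable M"
  by (rule measurable_compose[OF _ borel_measurable_nth])

lemma power2_norm_eq_sum_components: "(norm x)\<^sup>2 = (\<Sum>i\<in>UNIV. (x $ i)\<^sup>2)"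
  for x :: "real^'n"
  unfolding power2_norm_eq_inner inner_vec_def by (simp add: power2_eq_square)

lemma integrable_component_square:
  fixes f :: "'a \<Rightarrow> real^'n"
  assumes [measurable]: "f \<in> borel_measurable M" and "integrable M (\<lambda>x. (norm (f x))\<^sup>2)"
  shows "integrable M (\<lambda>x. (f x $ i)\<^sup>2)"
proof (rule Bochner_Integration.integrable_bound[OF assms(2)])
  show "AE x in M. norm ((f x $ i)\<^sup>2) \<le> norm ((norm (f x))\<^sup>2)"
    using power_mono[OF component_le_norm_cart abs_ge_zero, of _ i 2] by simp
qed measurable

section \<open>Averages over balls\<close>

lemma sets_dist_less_pair:
  fixes M N :: "'a::{metric_space, second_countable_topology} measure"
  assumes "sets M = sets borel" "sets N = sets borel"
  shows "{p. dist (fst p) (snd p) < r} \<in> sets (M \<Otimes>\<^sub>M N)"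
proof -
  have "open {p::'a \<times> 'a. dist (fst p) (snd p) < r}"
    by (intro open_Collect_less continuous_intros)
  then show ?thesis
    unfolding sets_pair_measure_cong[OF assms] borel_prod by (rule borel_open)
qed

lemma dist_less_of_same_grid_cell:
  fixes w w' :: "real^'n" and h :: real
  assumes "h > 0" and same_cell: "\<And>i. \<lfloor>(w $ i - a i) / h\<rfloor> = \<lfloor>(w' $ i - a i) / h\<rfloor>"
  shows "dist w w' < CARD('n) * h"
proof -
  have "\<bar>(w - w') $ i\<bar> < h" for i
  proof -
    define x x' where "x = (w $ i - a i) / h" and "x' = (w' $ i - a i) / h"
    have "\<bar>x - x'\<bar> < 1"
      using same_cell[of i] of_int_floor_le[of x] of_int_floor_le[of x'] real_of_int_floor_add_one_gt[of x]
        real_of_int_floor_add_one_gt[of x'] unfolding x_def x'_def by linarith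
    moreover have "x - x' = (w - w') $ i / h"
      using \<open>h > 0\<close> by (simp add: x_def x'_def field_simps)
    ultimately show ?thesis
      using \<open>h > 0\<close> by (simp add: abs_divide divide_less_eq)
  qed
  then have "dist w w' < (\<Sum>i\<in>(UNIV::'n set). h)"
    using norm_le_l1_cart[of "w - w'"] sum_strict_mono[of UNIV "\<lambda>i. \<bar>(w - w') $ i\<bar>" "\<lambda>_. h"]
    by (simp add: dist_norm)
  then show ?thesis
    by simp
qed

lemma grid_index_of_mem_ball:
  fixes w y :: "real^'n"
  assumes "w \<in> ball y r" and "r > 0"
  shows "\<lfloor>(w $ i - (y $ i - r)) / (r / CARD('n))\<rfloor> \<in> {0..<int (2 * CARD('n))}"
proof -
  define h where "h = r / CARD('n)"
  have "\<bar>w $ i - y $ i\<bar> < r"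
    using assms(1) component_le_norm_cart[of "w - y" i] by (simp add: dist_norm norm_minus_commute)
  moreover have "h > 0" "2 * real CARD('n) * h = 2 * r"
    using assms(2) by (simp_all add: h_def)
  ultimately have "0 < (w $ i - (y $ i - r)) / h" "(w $ i - (y $ i - r)) / h < 2 * CARD('n)"
    by (simp_all add: divide_less_eq)
  then show ?thesis
    by (simp add: h_def[symmetric] floor_less_iff)
qed

lemma ball_covered_by_small_cells:
  fixes y :: "real^'n"
  assumes "r > 0"
  obtains C where "finite C" "card C \<le> (2 * CARD('n)) ^ CARD('n)" "ball y r \<subseteq> \<Union>C"
    "\<And>S. S \<in> C \<Longrightarrow> S \<in> sets borel"
    "\<And>S w w'. S \<in> C \<Longrightarrow> w \<in> S \<Longrightarrow> w' \<in> S \<Longrightarrow> dist w w' < r"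
proof -
  define h where "h = r / CARD('n)"
  define cell where "cell w = (\<lambda>i. \<lfloor>(w $ i - (y $ i - r)) / h\<rfloor>)" for w :: "real^'n"
  define C where "C = (\<lambda>k. {w. cell w = k}) ` cell ` ball y r"
  have h: "h > 0"
    using assms by (simp add: h_def)
  have "cell w i \<in> {0..<int (2 * CARD('n))}" if "w \<in> ball y r" for w i
    using grid_index_of_mem_ball[OF that assms] by (simp add: cell_def h_def)
  define P :: "('n \<Rightarrow> int) set" where "P = (\<Pi>\<^sub>E i\<in>UNIV. {0..<int (2 * CARD('n))})"
  have "cell ` ball y r \<subseteq> P"
    using \<open>\<And>w i. w \<in> ball y r \<Longrightarrow> cell w i \<in> _\<close> by (auto simp: P_def PiE_iff)
  moreover have "finite P" "card P = (2 * CARD('n)) ^ CARD('n)"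
    by (simp_all add: P_def finite_PiE card_PiE nat_mult_distrib power_mult_distrib)
  ultimately have "finite (cell ` ball y r)" "card (cell ` ball y r) \<le> (2 * CARD('n)) ^ CARD('n)"
    by (metis finite_subset, metis card_mono)
  then have fin: "finite C" and card: "card C \<le> (2 * CARD('n)) ^ CARD('n)"
    unfolding C_def using card_image_le le_trans by blast+
  have cover: "ball y r \<subseteq> \<Union>C"
    unfolding C_def by blast
  have borel: "S \<in> sets borel" if "S \<in> C" for S
  proof -
    from that obtain k where S: "S = {w. \<forall>i. \<lfloor>(w $ i - (y $ i - r)) / h\<rfloor> = k i}"
      unfolding C_def cell_def by (auto simp: fun_eq_iff)
    show ?thesis
      unfolding S by measurable
  qed
  have small: "dist w w' < r" if "S \<in> C" "w \<in> S" "w' \<in> S" for S w w'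
  proof -
    have "cell w = cell w'"
      using that unfolding C_def by auto
    with h have "dist w w' < CARD('n) * h"
      by (intro dist_less_of_same_grid_cell[where a="\<lambda>i. y $ i - r"]) (simp_all add: cell_def fun_eq_iff)
    then show ?thesis
      by (simp add: h_def)
  qed
  show thesis
    using that[OF fin card cover borel small] .
qed

lemma sets_ball[measurable]: "ball z r \<in> sets borel"
  by simp

locale finite_borel_measure = finite_measure \<mu>
  for \<mu> :: "(real^'n) measure" +
  assumes sets_eq_borel[measurable_cong]: "sets \<mu> = sets borel"
begin

definition ball_avg :: "real \<Rightarrow> (real^'n \<Rightarrow> 'b::{banach, second_countable_topology}) \<Rightarrow> real^'n \<Rightarrow> 'b" where
  "ball_avg r f z = inverse (measure \<mu> (ball z r)) *\<^sub>R (\<integral>y. indicator (ball z r) y *\<^sub>R f y \<partial>\<mu>)"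

lemma ball_avg_real:
  fixes f :: "real^'n \<Rightarrow> real"
  shows "ball_avg r f z = (\<integral>y. indicator (ball z r) y * f y \<partial>\<mu>) / measure \<mu> (ball z r)"
  by (simp add: ball_avg_def divide_inverse mult.commute)

lemma borel_measurable_ball_integral[measurable]:
  fixes f :: "real^'n \<Rightarrow> 'b::{banach, second_countable_topology}"
  assumes [measurable]: "f \<in> borel_measurable borel"
  shows "(\<lambda>z. \<integral>y. indicator (ball z r) y *\<^sub>R f y \<partial>\<mu>) \<in> borel_measurable borel"
proof -
  note sets_dist_less_pair[OF refl sets_eq_borel, measurable]
  have "(\<lambda>(z, y). indicator {p. dist (fst p) (snd p) < r} (z, y) *\<^sub>R f y) \<in> borel_measurable (borel \<Otimes>\<^sub>M \<mu>)"
    by measurable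
  then show ?thesis
    by (simp add: indicator_def dist_commute borel_measurable_lebesgue_integral case_prod_beta' ball_def)
qed

lemma borel_measurable_measure_ball[measurable]:
  "(\<lambda>z. measure \<mu> (ball z r)) \<in> borel_measurable borel"
proof -
  have "(\<lambda>z. \<integral>y. indicator (ball z r) y *\<^sub>R (1::real) \<partial>\<mu>) \<in> borel_measurable borel"
    by measurable
  then show ?thesis
    by (simp add: sets_eq_borel)
qed

lemma borel_measurable_ball_avg[measurable]:
  assumes [measurable]: "f \<in> borel_measurable borel"
  shows "ball_avg r f \<in> borel_measurable borel"
  unfolding ball_avg_def by measurable

lemma integrable_indicator_ball_scaleR:
  fixes f :: "real^'n \<Rightarrow> 'b::{banach, second_countable_topology}"
  shows "integrable \<mu> f \<Longrightarrow> integrable \<mu> (\<lambda>y. indicator (ball z r) y *\<^sub>R f y)"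
  by (rule integrable_mult_indicator) (simp_all add: sets_eq_borel)

lemma ball_avg_component:
  fixes f :: "real^'n \<Rightarrow> real^'m"
  assumes "integrable \<mu> f"
  shows "ball_avg r f z $ i = ball_avg r (\<lambda>y. f y $ i) z"
proof -
  have "(\<integral>y. indicator (ball z r) y *\<^sub>R f y \<partial>\<mu>) $ i = (\<integral>y. indicator (ball z r) y * f y $ i \<partial>\<mu>)"
    using integral_bounded_linear[OF bounded_linear_vec_nth integrable_indicator_ball_scaleR[OF assms]]
    by simp
  then show ?thesis
    by (simp add: ball_avg_def)
qed

lemma ball_avg_diff:
  assumes "integrable \<mu> f" "integrable \<mu> g"
  shows "ball_avg r (\<lambda>y. f y - g y) z = ball_avg r f z - ball_avg r g z"
  using integrable_indicator_ball_scaleR[OF assms(1)] integrable_indicator_ball_scaleR[OF assms(2)]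
  by (simp add: ball_avg_def scaleR_diff_right)

lemma ball_avg_add:
  assumes "integrable \<mu> f" "integrable \<mu> g"
  shows "ball_avg r (\<lambda>y. f y + g y) z = ball_avg r f z + ball_avg r g z"
  using integrable_indicator_ball_scaleR[OF assms(1)] integrable_indicator_ball_scaleR[OF assms(2)]
  by (simp add: ball_avg_def scaleR_add_right)

lemma ball_avg_mult_left:
  fixes f :: "real^'n \<Rightarrow> real"
  shows "ball_avg r (\<lambda>y. c * f y) z = c * ball_avg r f z"
  by (simp add: ball_avg_real mult.left_commute)

lemma ball_avg_const:
  assumes "0 < measure \<mu> (ball z r)"
  shows "ball_avg r (\<lambda>_. c) z = c"
  using assms by (simp add: ball_avg_def sets_eq_borel less_top[symmetric])

lemma norm_ball_avg_le:
  assumes "0 \<le> c" and "\<And>y. y \<in> ball z r \<Longrightarrow> norm (f y) \<le> c"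
  shows "norm (ball_avg r f z) \<le> c"
proof -
  define m where "m = measure \<mu> (ball z r)"
  have "norm (\<integral>y. indicator (ball z r) y *\<^sub>R f y \<partial>\<mu>) \<le> (\<integral>y. norm (indicator (ball z r) y *\<^sub>R f y) \<partial>\<mu>)"
    by (rule integral_norm_bound)
  also have "\<dots> \<le> (\<integral>y. c * indicator (ball z r) y \<partial>\<mu>)"
  proof (rule integral_mono')
    show "integrable \<mu> (\<lambda>y. c * indicator (ball z r) y)"
      by (simp add: sets_eq_borel less_top[symmetric])
  qed (use assms in \<open>auto split: split_indicator\<close>)
  also have "\<dots> = c * m"
    by (simp add: m_def sets_eq_borel)
  finally have "norm (\<integral>y. indicator (ball z r) y *\<^sub>R f y \<partial>\<mu>) \<le> c * m" .
  then show ?thesis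
    using assms(1) measure_nonneg[of \<mu> "ball z r"]
    by (cases "m = 0") (auto simp: ball_avg_def m_def[symmetric] field_simps)
qed

lemma ball_avg_equivariant:
  fixes f :: "real^'n \<Rightarrow> real^'n"
  assumes T: "orthogonal_transformation T" and invariant: "distr \<mu> borel T = \<mu>"
    and [measurable]: "f \<in> borel_measurable borel" and f: "integrable \<mu> f"
    and equivariant: "AE y in \<mu>. f (T y) = T (f y)"
  shows "ball_avg r f (T z) = T (ball_avg r f z)"
proof -
  have lin: "bounded_linear T"
    using T by (simp add: orthogonal_transformation_def linear_conv_bounded_linear)
  then have [measurable]: "T \<in> borel_measurable borel"
    by (intro borel_measurable_continuous_onI linear_continuous_on)
  have ball: "T y \<in> ball (T z) r \<longleftrightarrow> y \<in> ball z r" for y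
    using T by (simp add: orthogonal_transformation_isometry)
  have "T -` ball (T z) r = ball z r"
    using ball by auto
  have "measure \<mu> (ball (T z) r) = measure (distr \<mu> borel T) (ball (T z) r)"
    by (simp add: invariant)
  also have "\<dots> = measure \<mu> (ball z r)"
    using \<open>T -` ball (T z) r = ball z r\<close> by (subst measure_distr) auto
  finally have measure_eq: "measure \<mu> (ball (T z) r) = measure \<mu> (ball z r)" .
  have "(\<integral>y. indicator (ball (T z) r) y *\<^sub>R f y \<partial>\<mu>)
      = (\<integral>y. indicator (ball (T z) r) y *\<^sub>R f y \<partial>distr \<mu> borel T)"
    by (simp add: invariant)
  also have "\<dots> = (\<integral>y. indicator (ball (T z) r) (T y) *\<^sub>R f (T y) \<partial>\<mu>)"
    by (rule integral_distr) measurable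
  also have "\<dots> = (\<integral>y. T (indicator (ball z r) y *\<^sub>R f y) \<partial>\<mu>)"
  proof (rule integral_cong_AE)
    have "indicator (ball (T z) r) (T y) = (indicator (ball z r) y :: real)" for y
      using ball by (simp add: indicator_def)
    then show "AE y in \<mu>. indicator (ball (T z) r) (T y) *\<^sub>R f (T y) = T (indicator (ball z r) y *\<^sub>R f y)"
      using equivariant by (auto simp: linear_scale[OF bounded_linear.linear[OF lin]])
  qed measurable
  also have "\<dots> = T (\<integral>y. indicator (ball z r) y *\<^sub>R f y \<partial>\<mu>)"
    by (rule integral_bounded_linear[OF lin integrable_indicator_ball_scaleR[OF f]])
  finally show ?thesis
    by (simp add: ball_avg_def measure_eq linear_scale[OF bounded_linear.linear[OF lin]])
qed

lemma ball_avg_square_le: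
  fixes f :: "real^'n \<Rightarrow> real"
  assumes [measurable]: "f \<in> borel_measurable borel" and sq: "integrable \<mu> (\<lambda>y. (f y)\<^sup>2)"
  shows "(ball_avg r f z)\<^sup>2 \<le> (\<integral>y. indicator (ball z r) y * (f y)\<^sup>2 \<partial>\<mu>) / measure \<mu> (ball z r)"
proof (cases "measure \<mu> (ball z r) = 0")
  case True
  then show ?thesis
    by (simp add: ball_avg_real)
next
  case False
  define m where "m = measure \<mu> (ball z r)"
  define a where "a = ball_avg r f z"
  define I where "I = (\<integral>y. indicator (ball z r) y * (f y)\<^sup>2 \<partial>\<mu>)"
  have m: "m > 0"
    using False measure_nonneg[of \<mu> "ball z r"] unfolding m_def by linarith
  have "integrable \<mu> f"
    by (rule square_integrable_imp_integrable[OF _ sq]) measurable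
  then have int: "integrable \<mu> (\<lambda>y. indicator (ball z r) y * f y)"
    "integrable \<mu> (\<lambda>y. indicator (ball z r) y * (f y)\<^sup>2)"
    "integrable \<mu> (\<lambda>y. indicator (ball z r) y :: real)"
    using integrable_indicator_ball_scaleR[of f z r] integrable_indicator_ball_scaleR[OF sq, of z r]
    by (simp_all add: sets_eq_borel less_top[symmetric])
  have "(\<integral>y. indicator (ball z r) y * f y \<partial>\<mu>) = a * m"
    using m by (simp add: a_def m_def ball_avg_real)
  \<comment> \<open>the variance of \<open>f\<close> over the ball is nonnegative\<close>
  have "0 \<le> (\<integral>y. indicator (ball z r) y * (f y - a)\<^sup>2 \<partial>\<mu>)"
    by (intro integral_nonneg_AE) auto
  also have "\<dots> = (\<integral>y. indicator (ball z r) y * (f y)\<^sup>2 - 2 * a * (indicator (ball z r) y * f y)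
      + a\<^sup>2 * indicator (ball z r) y \<partial>\<mu>)"
    by (simp add: power2_diff algebra_simps)
  also have "\<dots> = I - a\<^sup>2 * m"
    using int \<open>(\<integral>y. indicator (ball z r) y * f y \<partial>\<mu>) = a * m\<close>
    by (simp add: I_def m_def sets_eq_borel power2_eq_square)
  finally show ?thesis
    using m by (simp add: a_def I_def m_def[symmetric] field_simps)
qed

lemma nn_integral_small_set_div_measure_ball_le:
  assumes S: "S \<in> sets borel" and small: "\<And>w w'. w \<in> S \<Longrightarrow> w' \<in> S \<Longrightarrow> dist w w' < r"
  shows "(\<integral>\<^sup>+z. ennreal (indicator S z / measure \<mu> (ball z r)) \<partial>\<mu>) \<le> 1"
proof (cases "measure \<mu> S = 0")
  case True
  then have "AE z in \<mu>. z \<notin> S"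
    using S by (intro AE_not_in null_setsI) (auto simp: sets_eq_borel emeasure_eq_measure)
  then have "(\<integral>\<^sup>+z. ennreal (indicator S z / measure \<mu> (ball z r)) \<partial>\<mu>) = (\<integral>\<^sup>+z. 0 \<partial>\<mu>)"
    by (intro nn_integral_cong_AE) (auto elim: AE_mp)
  then show ?thesis
    by simp
next
  case False
  then have pos: "measure \<mu> S > 0"
    using measure_nonneg[of \<mu> S] by linarith
  have "(\<integral>\<^sup>+z. ennreal (indicator S z / measure \<mu> (ball z r)) \<partial>\<mu>)
      \<le> (\<integral>\<^sup>+z. ennreal (1 / measure \<mu> S) * indicator S z \<partial>\<mu>)"
  proof (rule nn_integral_mono)
    fix z
    show "ennreal (indicator S z / measure \<mu> (ball z r)) \<le> ennreal (1 / measure \<mu> S) * indicator S z"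
    proof (cases "z \<in> S")
      case True
      then have "S \<subseteq> ball z r"
        using small by auto
      then have "measure \<mu> S \<le> measure \<mu> (ball z r)"
        using S by (intro finite_measure_mono) (simp_all add: sets_eq_borel)
      then have "1 / measure \<mu> (ball z r) \<le> 1 / measure \<mu> S"
        using pos by (intro divide_left_mono) auto
      then show ?thesis
        using True by (simp add: ennreal_leI)
    qed simp
  qed
  also have "\<dots> = ennreal (1 / measure \<mu> S) * emeasure \<mu> S"
    using S by (simp add: nn_integral_cmult_indicator sets_eq_borel)
  also have "\<dots> = 1"
    using pos by (simp add: emeasure_eq_measure ennreal_mult[symmetric])
  finally show ?thesis .
qed

lemma nn_integral_indicator_ball_div_measure_ball_le:
  assumes "r > 0"
  shows "(\<integral>\<^sup>+z. ennreal (indicator (ball y r) z / measure \<mu> (ball z r)) \<partial>\<mu>)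
    \<le> of_nat ((2 * CARD('n)) ^ CARD('n))"
proof -
  obtain C where C: "finite C" "card C \<le> (2 * CARD('n)) ^ CARD('n)" "ball y r \<subseteq> \<Union>C"
    "\<And>S. S \<in> C \<Longrightarrow> S \<in> sets borel"
    "\<And>S w w'. S \<in> C \<Longrightarrow> w \<in> S \<Longrightarrow> w' \<in> S \<Longrightarrow> dist w w' < r"
    using ball_covered_by_small_cells[OF assms] by blast
  have [measurable]: "S \<in> sets \<mu>" if "S \<in> C" for S
    using C(4)[OF that] by (simp add: sets_eq_borel)
  have "(\<integral>\<^sup>+z. ennreal (indicator (ball y r) z / measure \<mu> (ball z r)) \<partial>\<mu>)
      \<le> (\<integral>\<^sup>+z. (\<Sum>S\<in>C. ennreal (indicator S z / measure \<mu> (ball z r))) \<partial>\<mu>)"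
  proof (rule nn_integral_mono)
    fix z
    show "ennreal (indicator (ball y r) z / measure \<mu> (ball z r))
        \<le> (\<Sum>S\<in>C. ennreal (indicator S z / measure \<mu> (ball z r)))"
    proof (cases "z \<in> ball y r")
      case True
      then obtain S where "S \<in> C" "z \<in> S"
        using C(3) by blast
      then have "ennreal (indicator (ball y r) z / measure \<mu> (ball z r))
          = ennreal (indicator S z / measure \<mu> (ball z r))"
        using True by simp
      also have "\<dots> \<le> (\<Sum>S\<in>C. ennreal (indicator S z / measure \<mu> (ball z r)))"
        using \<open>S \<in> C\<close> C(1) by (intro member_le_sum) auto
      finally show ?thesis .
    qed simp
  qed
  also have "\<dots> = (\<Sum>S\<in>C. \<integral>\<^sup>+z. ennreal (indicator S z / measure \<mu> (ball z r)) \<partial>\<mu>)"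
    by (intro nn_integral_sum) measurable
  also have "\<dots> \<le> (\<Sum>S\<in>C. 1)"
    using C(4,5) by (intro sum_mono nn_integral_small_set_div_measure_ball_le) blast+
  also have "\<dots> = of_nat (card C)"
    by simp
  also have "\<dots> \<le> of_nat ((2 * CARD('n)) ^ CARD('n))"
    using C(2) by (rule of_nat_mono)
  finally show ?thesis .
qed

lemma borel_measurable_indicator_ball_div[measurable]:
  fixes h :: "real^'n \<Rightarrow> real"
  assumes [measurable]: "h \<in> borel_measurable borel"
  shows "(\<lambda>(z, y). indicator (ball z r) y * h y / measure \<mu> (ball z r)) \<in> borel_measurable (\<mu> \<Otimes>\<^sub>M \<mu>)"
proof -
  note sets_dist_less_pair[OF sets_eq_borel sets_eq_borel, measurable]
  have "(\<lambda>(z, y). indicator {p. dist (fst p) (snd p) < r} (z, y) * h y / measure \<mu> (ball z r))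
      \<in> borel_measurable (\<mu> \<Otimes>\<^sub>M \<mu>)"
    by measurable
  then show ?thesis
    by (simp add: indicator_def case_prod_beta' dist_commute ball_def)
qed

lemma ennreal_ball_avg_square_le:
  fixes f :: "real^'n \<Rightarrow> real"
  assumes [measurable]: "f \<in> borel_measurable borel" and sq: "integrable \<mu> (\<lambda>y. (f y)\<^sup>2)"
  shows "ennreal ((ball_avg r f z)\<^sup>2)
    \<le> (\<integral>\<^sup>+y. ennreal (indicator (ball z r) y * (f y)\<^sup>2 / measure \<mu> (ball z r)) \<partial>\<mu>)"
proof -
  have "integrable \<mu> (\<lambda>y. indicator (ball z r) y * (f y)\<^sup>2)"
    using integrable_indicator_ball_scaleR[OF sq] by simp
  then have "(\<integral>\<^sup>+y. ennreal (indicator (ball z r) y * (f y)\<^sup>2 / measure \<mu> (ball z r)) \<partial>\<mu>)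
      = ennreal (\<integral>y. indicator (ball z r) y * (f y)\<^sup>2 / measure \<mu> (ball z r) \<partial>\<mu>)"
    by (intro nn_integral_eq_integral) auto
  moreover have "(ball_avg r f z)\<^sup>2 \<le> (\<integral>y. indicator (ball z r) y * (f y)\<^sup>2 / measure \<mu> (ball z r) \<partial>\<mu>)"
    using ball_avg_square_le[OF assms, of r z] by simp
  ultimately show ?thesis
    by (simp add: ennreal_leI)
qed

lemma nn_integral_ball_avg_square_le:
  fixes f :: "real^'n \<Rightarrow> real"
  assumes [measurable]: "f \<in> borel_measurable borel" and sq: "integrable \<mu> (\<lambda>y. (f y)\<^sup>2)"
    and "r > 0"
  shows "(\<integral>\<^sup>+z. ennreal ((ball_avg r f z)\<^sup>2) \<partial>\<mu>)
    \<le> of_nat ((2 * CARD('n)) ^ CARD('n)) * (\<integral>\<^sup>+y. ennreal ((f y)\<^sup>2) \<partial>\<mu>)"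
proof -
  interpret pair_sigma_finite \<mu> \<mu>
    by (simp add: pair_sigma_finite_def sigma_finite_measure_axioms)
  define K :: ennreal where "K = of_nat ((2 * CARD('n)) ^ CARD('n))"
  define g where "g z y = indicator (ball z r) y * (f y)\<^sup>2 / measure \<mu> (ball z r)" for z y
  have "(\<lambda>(z, y). g z y) \<in> borel_measurable (\<mu> \<Otimes>\<^sub>M \<mu>)"
    unfolding g_def by measurable
  have "ennreal ((ball_avg r f z)\<^sup>2) \<le> (\<integral>\<^sup>+y. ennreal (g z y) \<partial>\<mu>)" for z
    unfolding g_def by (rule ennreal_ball_avg_square_le[OF assms(1) sq])
  then have "(\<integral>\<^sup>+z. ennreal ((ball_avg r f z)\<^sup>2) \<partial>\<mu>) \<le> (\<integral>\<^sup>+z. \<integral>\<^sup>+y. ennreal (g z y) \<partial>\<mu> \<partial>\<mu>)"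
    by (intro nn_integral_mono)
  also have "\<dots> = (\<integral>\<^sup>+y. \<integral>\<^sup>+z. ennreal (g z y) \<partial>\<mu> \<partial>\<mu>)"
    using \<open>(\<lambda>(z, y). g z y) \<in> borel_measurable (\<mu> \<Otimes>\<^sub>M \<mu>)\<close> by (intro Fubini'[symmetric]) simp
  also have "\<dots> \<le> (\<integral>\<^sup>+y. ennreal ((f y)\<^sup>2) * K \<partial>\<mu>)"
  proof (rule nn_integral_mono)
    fix y
    have "(\<integral>\<^sup>+z. ennreal (g z y) \<partial>\<mu>)
        = (\<integral>\<^sup>+z. ennreal ((f y)\<^sup>2) * ennreal (indicator (ball y r) z / measure \<mu> (ball z r)) \<partial>\<mu>)"
      by (intro nn_integral_cong)
        (simp add: g_def ennreal_mult'[symmetric] indicator_def dist_commute)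
    also have "\<dots> = ennreal ((f y)\<^sup>2) * (\<integral>\<^sup>+z. ennreal (indicator (ball y r) z / measure \<mu> (ball z r)) \<partial>\<mu>)"
      by (rule nn_integral_cmult) measurable
    also have "\<dots> \<le> ennreal ((f y)\<^sup>2) * K"
      unfolding K_def by (intro mult_left_mono nn_integral_indicator_ball_div_measure_ball_le assms) simp
    finally show "(\<integral>\<^sup>+z. ennreal (g z y) \<partial>\<mu>) \<le> ennreal ((f y)\<^sup>2) * K" .
  qed
  also have "\<dots> = K * (\<integral>\<^sup>+y. ennreal ((f y)\<^sup>2) \<partial>\<mu>)"
    by (subst nn_integral_multc) (auto simp: mult.commute)
  finally show ?thesis
    unfolding K_def .
qed

lemma
  fixes f :: "real^'n \<Rightarrow> real"
  assumes [measurable]: "f \<in> borel_measurable borel" and sq: "integrable \<mu> (\<lambda>y. (f y)\<^sup>2)"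
    and "r > 0"
  shows integrable_ball_avg_square: "integrable \<mu> (\<lambda>z. (ball_avg r f z)\<^sup>2)"
    and integral_ball_avg_square_le:
      "(\<integral>z. (ball_avg r f z)\<^sup>2 \<partial>\<mu>) \<le> (2 * CARD('n)) ^ CARD('n) * (\<integral>y. (f y)\<^sup>2 \<partial>\<mu>)"
proof -
  have "(\<integral>\<^sup>+y. ennreal ((f y)\<^sup>2) \<partial>\<mu>) = ennreal (\<integral>y. (f y)\<^sup>2 \<partial>\<mu>)"
    using sq by (intro nn_integral_eq_integral) auto
  then have bound: "(\<integral>\<^sup>+z. ennreal ((ball_avg r f z)\<^sup>2) \<partial>\<mu>)
      \<le> ennreal ((2 * CARD('n)) ^ CARD('n) * (\<integral>y. (f y)\<^sup>2 \<partial>\<mu>))"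
    using nn_integral_ball_avg_square_le[OF assms]
    by (simp add: ennreal_mult ennreal_of_nat_eq_real_of_nat)
  show int: "integrable \<mu> (\<lambda>z. (ball_avg r f z)\<^sup>2)"
    using bound by (intro integrableI_nonneg) (auto simp: top.not_eq_extremum order_le_less_trans)
  have "ennreal (\<integral>z. (ball_avg r f z)\<^sup>2 \<partial>\<mu>) = (\<integral>\<^sup>+z. ennreal ((ball_avg r f z)\<^sup>2) \<partial>\<mu>)"
    using int by (intro nn_integral_eq_integral[symmetric]) auto
  with bound have "ennreal (\<integral>z. (ball_avg r f z)\<^sup>2 \<partial>\<mu>)
      \<le> ennreal ((2 * CARD('n)) ^ CARD('n) * (\<integral>y. (f y)\<^sup>2 \<partial>\<mu>))"
    by simp
  then show "(\<integral>z. (ball_avg r f z)\<^sup>2 \<partial>\<mu>) \<le> (2 * CARD('n)) ^ CARD('n) * (\<integral>y. (f y)\<^sup>2 \<partial>\<mu>)"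
    by (rule ennreal_le_iff[THEN iffD1, rotated]) simp
qed

section \<open>Convergence of ball averages in \<open>L\<^sup>2\<close>\<close>

lemma AE_measure_ball_pos:
  assumes "r > 0"
  shows "AE z in \<mu>. 0 < measure \<mu> (ball z r)"
proof -
  obtain X :: "(real^'n) set" where X: "countable X" "\<And>Y. open Y \<Longrightarrow> Y \<noteq> {} \<Longrightarrow> \<exists>x\<in>X. x \<in> Y"
    using countable_dense_setE by blast
  define I where "I = {x\<in>X. measure \<mu> (ball x (r/2)) = 0}"
  have "(\<Union>x\<in>I. ball x (r/2)) \<in> null_sets \<mu>"
    using X(1) by (intro null_sets_UN') (auto simp: I_def emeasure_eq_measure sets_eq_borel intro!: null_setsI)
  moreover have "{z \<in> space \<mu>. \<not> 0 < measure \<mu> (ball z r)} \<subseteq> (\<Union>x\<in>I. ball x (r/2))"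
  proof clarify
    fix z assume "\<not> 0 < measure \<mu> (ball z r)"
    then have "measure \<mu> (ball z r) = 0"
      using measure_nonneg[of \<mu> "ball z r"] by linarith
    obtain x where x: "x \<in> X" "dist z x < r/2"
      using X(2)[of "ball z (r/2)"] assms by auto
    then have "ball x (r/2) \<subseteq> ball z r"
      by (auto simp: ball_def dist_commute intro: dist_triangle_half_l)
    then have "measure \<mu> (ball x (r/2)) \<le> measure \<mu> (ball z r)"
      by (intro finite_measure_mono) (simp_all add: sets_eq_borel)
    then have "measure \<mu> (ball x (r/2)) = 0"
      using \<open>measure \<mu> (ball z r) = 0\<close> by (simp add: measure_le_0_iff)
    with x show "z \<in> (\<Union>x\<in>I. ball x (r/2))"
      by (auto simp: I_def dist_commute)
  qed
  ultimately show ?thesis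
    by (rule AE_I')
qed

lemma ball_avg_tendsto_continuous:
  fixes f :: "real^'n \<Rightarrow> real"
  assumes cont: "continuous_on UNIV f" and bounded: "\<And>y. \<bar>f y\<bar> \<le> B"
    and pos: "\<And>k. 0 < measure \<mu> (ball z (1 / Suc k))"
  shows "(\<lambda>k. ball_avg (1 / Suc k) f z) \<longlonglongrightarrow> f z"
proof (rule LIMSEQ_I)
  fix e :: real assume "e > 0"
  then obtain d where "d > 0" and d: "\<And>y. dist y z < d \<Longrightarrow> \<bar>f y - f z\<bar> < e/2"
    using cont unfolding continuous_on_iff by (metis UNIV_I half_gt_zero dist_real_def)
  obtain N where N: "1 / Suc N < d"
    using \<open>d > 0\<close> nat_approx_posE by blast
  have [measurable]: "f \<in> borel_measurable borel"
    using cont by (rule borel_measurable_continuous_onI)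
  have "integrable \<mu> f"
    using bounded by (intro integrable_const_bound[of _ B]) auto
  have "norm (ball_avg (1 / Suc k) f z - f z) < e" if "k \<ge> N" for k
  proof -
    define r where "r = 1 / real (Suc k)"
    have "r \<le> 1 / Suc N"
      using that by (simp add: r_def frac_le)
    have "ball_avg r f z - f z = ball_avg r (\<lambda>y. f y - f z) z"
      using pos[of k] \<open>integrable \<mu> f\<close> by (simp add: ball_avg_diff ball_avg_const r_def)
    also have "norm \<dots> \<le> e/2"
    proof (rule norm_ball_avg_le)
      show "norm (f y - f z) \<le> e/2" if "y \<in> ball z r" for y
        using that \<open>r \<le> 1 / Suc N\<close> N d[of y] by (simp add: dist_commute)
    qed (use \<open>e > 0\<close> in simp)
    finally show ?thesis
      using \<open>e > 0\<close> by (simp add: r_def)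
  qed
  then show "\<exists>N. \<forall>k\<ge>N. norm (ball_avg (1 / Suc k) f z - f z) < e"
    by blast
qed

definition square_integrable :: "(real^'n \<Rightarrow> real) \<Rightarrow> bool" where
  "square_integrable f \<longleftrightarrow> f \<in> borel_measurable borel \<and> integrable \<mu> (\<lambda>y. (f y)\<^sup>2)"

lemma square_integrable_integrable: "square_integrable f \<Longrightarrow> integrable \<mu> f"
  unfolding square_integrable_def by (auto intro: square_integrable_imp_integrable)

lemma
  assumes "square_integrable f" "square_integrable g"
  shows square_integrable_add: "square_integrable (\<lambda>y. f y + g y)"
    and square_integrable_diff: "square_integrable (\<lambda>y. f y - g y)"
  using assms square_integrable_add_diff[of f \<mu> g] by (auto simp: square_integrable_def)

lemma square_integrable_mult_left: "square_integrable f \<Longrightarrow> square_integrable (\<lambda>y. c * f y)"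
  by (auto simp: square_integrable_def power_mult_distrib)

lemma square_integrable_ball_avg:
  "square_integrable f \<Longrightarrow> r > 0 \<Longrightarrow> square_integrable (ball_avg r f)"
  by (auto simp: square_integrable_def intro: integrable_ball_avg_square)

lemma square_integrable_bounded:
  assumes [measurable]: "f \<in> borel_measurable borel" and bounded: "\<And>y. \<bar>f y\<bar> \<le> B"
  shows "square_integrable f"
proof -
  have "(f y)\<^sup>2 \<le> B\<^sup>2" for y
    using power_mono[OF bounded abs_ge_zero, of y 2] by simp
  then show ?thesis
    unfolding square_integrable_def by (auto intro!: integrable_const_bound[of _ "B\<^sup>2"])
qed

lemma integral_square_add_le:
  assumes "square_integrable f" "square_integrable g"
  shows "(\<integral>y. (f y + g y)\<^sup>2 \<partial>\<mu>) \<le> 2 * (\<integral>y. (f y)\<^sup>2 \<partial>\<mu>) + 2 * (\<integral>y. (g y)\<^sup>2 \<partial>\<mu>)"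
proof -
  have "(a + b)\<^sup>2 \<le> 2 * a\<^sup>2 + 2 * b\<^sup>2" for a b :: real
    using sum_squares_ge_zero[of "a - b" 0] by (simp add: power2_eq_square algebra_simps)
  then have "(\<integral>y. (f y + g y)\<^sup>2 \<partial>\<mu>) \<le> (\<integral>y. 2 * (f y)\<^sup>2 + 2 * (g y)\<^sup>2 \<partial>\<mu>)"
    using assms square_integrable_add[OF assms]
    by (intro integral_mono) (auto simp: square_integrable_def)
  then show ?thesis
    using assms by (simp add: square_integrable_def)
qed

definition L2_avg_error :: "nat \<Rightarrow> (real^'n \<Rightarrow> real) \<Rightarrow> real" where
  "L2_avg_error k f = (\<integral>z. (ball_avg (1 / Suc k) f z - f z)\<^sup>2 \<partial>\<mu>)"

lemma L2_avg_error_nonneg: "0 \<le> L2_avg_error k f"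
  unfolding L2_avg_error_def by (intro integral_nonneg_AE) simp

lemma square_integrable_ball_avg_diff:
  "square_integrable f \<Longrightarrow> square_integrable (\<lambda>z. ball_avg (1 / Suc k) f z - f z)"
  by (intro square_integrable_diff square_integrable_ball_avg) simp_all

lemma L2_avg_error_add_le:
  assumes "square_integrable f" "square_integrable g"
  shows "L2_avg_error k (\<lambda>y. f y + g y) \<le> 2 * L2_avg_error k f + 2 * L2_avg_error k g"
proof -
  have "ball_avg (1 / Suc k) (\<lambda>y. f y + g y) z - (f z + g z)
      = (ball_avg (1 / Suc k) f z - f z) + (ball_avg (1 / Suc k) g z - g z)" for z
    using assms by (simp add: ball_avg_add square_integrable_integrable)
  then show ?thesis
    unfolding L2_avg_error_def
    using integral_square_add_le[OF square_integrable_ball_avg_diff[OF assms(1), of k]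
        square_integrable_ball_avg_diff[OF assms(2), of k]]
    by (simp only:)
qed

lemma L2_avg_error_mult_left: "L2_avg_error k (\<lambda>y. c * f y) = c\<^sup>2 * L2_avg_error k f"
proof -
  have "(ball_avg (1 / Suc k) (\<lambda>y. c * f y) z - c * f z)\<^sup>2 = c\<^sup>2 * (ball_avg (1 / Suc k) f z - f z)\<^sup>2" for z
    by (simp add: ball_avg_mult_left power2_eq_square algebra_simps)
  then show ?thesis
    by (simp add: L2_avg_error_def)
qed

lemma L2_avg_error_le_approx:
  assumes f: "square_integrable f" and s: "square_integrable s"
  shows "L2_avg_error k f
    \<le> (2 * (2 * CARD('n)) ^ CARD('n) + 4) * (\<integral>y. (f y - s y)\<^sup>2 \<partial>\<mu>) + 4 * L2_avg_error k s"
proof -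
  define r where "r = 1 / real (Suc k)"
  have "r > 0"
    by (simp add: r_def)
  have fs: "square_integrable (\<lambda>y. f y - s y)" and sf: "square_integrable (\<lambda>y. s y - f y)"
    using f s by (simp_all add: square_integrable_diff)
  have split: "ball_avg r f z - f z
      = ball_avg r (\<lambda>y. f y - s y) z + ((ball_avg r s z - s z) + (s z - f z))" for z
    using f s by (simp add: ball_avg_diff square_integrable_integrable)
  have "L2_avg_error k f \<le> 2 * (\<integral>z. (ball_avg r (\<lambda>y. f y - s y) z)\<^sup>2 \<partial>\<mu>)
      + 2 * (\<integral>z. ((ball_avg r s z - s z) + (s z - f z))\<^sup>2 \<partial>\<mu>)"
    unfolding L2_avg_error_def r_def[symmetric] split
    using square_integrable_ball_avg_diff[OF s, of k] sf \<open>r > 0\<close>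
    by (intro integral_square_add_le square_integrable_ball_avg square_integrable_add fs)
      (simp_all add: r_def)
  also have "(\<integral>z. ((ball_avg r s z - s z) + (s z - f z))\<^sup>2 \<partial>\<mu>)
      \<le> 2 * L2_avg_error k s + 2 * (\<integral>y. (f y - s y)\<^sup>2 \<partial>\<mu>)"
    using integral_square_add_le[OF square_integrable_ball_avg_diff[OF s, of k] sf]
    by (simp add: L2_avg_error_def r_def power2_commute)
  also have "(\<integral>z. (ball_avg r (\<lambda>y. f y - s y) z)\<^sup>2 \<partial>\<mu>)
      \<le> (2 * CARD('n)) ^ CARD('n) * (\<integral>y. (f y - s y)\<^sup>2 \<partial>\<mu>)"
    using fs \<open>r > 0\<close> by (intro integral_ball_avg_square_le) (auto simp: square_integrable_def)
  finally show ?thesis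
    by (simp add: algebra_simps)
qed

lemma L2_avg_error_tendsto_add:
  assumes "square_integrable f" "square_integrable g"
    and "(\<lambda>k. L2_avg_error k f) \<longlonglongrightarrow> 0" "(\<lambda>k. L2_avg_error k g) \<longlonglongrightarrow> 0"
  shows "(\<lambda>k. L2_avg_error k (\<lambda>y. f y + g y)) \<longlonglongrightarrow> 0"
proof (rule tendsto_sandwich[OF _ _ tendsto_const])
  show "\<forall>\<^sub>F k in sequentially. 0 \<le> L2_avg_error k (\<lambda>y. f y + g y)"
    by (simp add: L2_avg_error_nonneg)
  show "\<forall>\<^sub>F k in sequentially. L2_avg_error k (\<lambda>y. f y + g y) \<le> 2 * L2_avg_error k f + 2 * L2_avg_error k g"
    using assms(1,2) by (simp add: L2_avg_error_add_le)
  show "(\<lambda>k. 2 * L2_avg_error k f + 2 * L2_avg_error k g) \<longlonglongrightarrow> 0"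
    using assms(3,4) by (intro tendsto_add_zero tendsto_mult_right_zero)
qed

lemma L2_avg_error_tendsto_sum:
  assumes "finite A"
    and "\<And>i. i \<in> A \<Longrightarrow> square_integrable (F i) \<and> (\<lambda>k. L2_avg_error k (F i)) \<longlonglongrightarrow> 0"
  shows "square_integrable (\<lambda>y. \<Sum>i\<in>A. F i y) \<and> (\<lambda>k. L2_avg_error k (\<lambda>y. \<Sum>i\<in>A. F i y)) \<longlonglongrightarrow> 0"
  using assms
proof (induction A rule: finite_induct)
  case empty
  then show ?case
    by (simp add: square_integrable_def L2_avg_error_def ball_avg_def)
next
  case (insert j A)
  then show ?case
    by (simp add: square_integrable_add L2_avg_error_tendsto_add)
qed

lemma L2_avg_error_tendsto_approx:
  assumes f: "square_integrable f"
    and approx: "\<And>e. e > 0 \<Longrightarrow> \<exists>s. square_integrable s \<and> (\<lambda>k. L2_avg_error k s) \<longlonglongrightarrow> 0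
      \<and> (\<integral>y. (f y - s y)\<^sup>2 \<partial>\<mu>) < e"
  shows "(\<lambda>k. L2_avg_error k f) \<longlonglongrightarrow> 0"
proof (rule LIMSEQ_I)
  fix e :: real assume "e > 0"
  define C :: real where "C = 2 * (2 * CARD('n)) ^ CARD('n) + 4"
  have "C > 0"
    by (simp add: C_def add_pos_nonneg)
  obtain s where s: "square_integrable s" "(\<lambda>k. L2_avg_error k s) \<longlonglongrightarrow> 0"
    and close: "(\<integral>y. (f y - s y)\<^sup>2 \<partial>\<mu>) < e / (2 * C)"
    using approx[of "e / (2 * C)"] \<open>e > 0\<close> \<open>C > 0\<close> by auto
  obtain N where N: "\<And>k. k \<ge> N \<Longrightarrow> L2_avg_error k s < e / 8"
    using order_tendstoD(2)[OF s(2), of "e / 8"] \<open>e > 0\<close> by (auto simp: eventually_sequentially)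
  have "norm (L2_avg_error k f - 0) < e" if "k \<ge> N" for k
  proof -
    have "L2_avg_error k f \<le> C * (\<integral>y. (f y - s y)\<^sup>2 \<partial>\<mu>) + 4 * L2_avg_error k s"
      using L2_avg_error_le_approx[OF f s(1)] by (simp add: C_def)
    also have "\<dots> < C * (e / (2 * C)) + 4 * (e / 8)"
      using close N[OF that] \<open>C > 0\<close> by (intro add_less_le_mono mult_strict_left_mono) auto
    also have "\<dots> = e"
      using \<open>C > 0\<close> by simp
    finally show ?thesis
      using L2_avg_error_nonneg[of k f] by simp
  qed
  then show "\<exists>N. \<forall>k\<ge>N. norm (L2_avg_error k f - 0) < e"
    by blast
qed

lemma L2_avg_error_tendsto_continuous:
  assumes cont: "continuous_on UNIV f" and bounded: "\<And>y. \<bar>f y\<bar> \<le> B"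
  shows "(\<lambda>k. L2_avg_error k f) \<longlonglongrightarrow> 0"
proof -
  have [measurable]: "f \<in> borel_measurable borel"
    using cont by (rule borel_measurable_continuous_onI)
  have "0 \<le> B"
    using bounded[of 0] by simp
  have "\<bar>ball_avg r f z - f z\<bar> \<le> 2 * B" for r z
    using norm_ball_avg_le[OF \<open>0 \<le> B\<close>, of z r f] bounded[of z] bounded by fastforce
  then have bound: "(ball_avg r f z - f z)\<^sup>2 \<le> (2 * B)\<^sup>2" for r z
    by (metis abs_le_square_iff abs_of_nonneg \<open>0 \<le> B\<close> mult_nonneg_nonneg zero_le_numeral)
  have "AE z in \<mu>. \<forall>k. 0 < measure \<mu> (ball z (1 / Suc k))"
    by (subst AE_all_countable) (simp add: AE_measure_ball_pos)
  then have "AE z in \<mu>. (\<lambda>k. (ball_avg (1 / Suc k) f z - f z)\<^sup>2) \<longlonglongrightarrow> 0"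
  proof eventually_elim
    case (elim z)
    have "(\<lambda>k. (ball_avg (1 / Suc k) f z - f z)\<^sup>2) \<longlonglongrightarrow> (f z - f z)\<^sup>2"
      using ball_avg_tendsto_continuous[OF cont bounded] elim by (intro tendsto_intros) auto
    then show ?case
      by simp
  qed
  then have "(\<lambda>k. \<integral>z. (ball_avg (1 / Suc k) f z - f z)\<^sup>2 \<partial>\<mu>) \<longlonglongrightarrow> (\<integral>z. 0 \<partial>\<mu>)"
    using bound by (intro integral_dominated_convergence[where w="\<lambda>_. (2 * B)\<^sup>2"]) auto
  then show ?thesis
    by (simp add: L2_avg_error_def)
qed

lemma compact_open_approx:
  assumes B: "B \<in> sets borel" and "e > 0"
  obtains K U where "compact K" "K \<subseteq> B" "open U" "B \<subseteq> U" "measure \<mu> U - measure \<mu> K < e"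
proof -
  have fin: "emeasure \<mu> (space \<mu>) \<noteq> \<infinity>"
    by simp
  obtain K where K: "compact K" "K \<subseteq> B" "measure \<mu> B < measure \<mu> K + e/2"
  proof (cases "measure \<mu> B < e/2")
    case True
    then show ?thesis
      using that[of "{}"] by simp
  next
    case False
    have "ennreal (measure \<mu> B - e/2) < emeasure \<mu> B"
      using False \<open>e > 0\<close> by (simp add: emeasure_eq_measure sets_eq_borel B ennreal_less_iff)
    also have "\<dots> = (SUP K \<in> {K. K \<subseteq> B \<and> compact K}. emeasure \<mu> K)"
      by (rule inner_regular[OF sets_eq_borel fin B])
    finally obtain K where "K \<subseteq> B" "compact K" "ennreal (measure \<mu> B - e/2) < emeasure \<mu> K"
      by (auto simp: less_SUP_iff)
    then show ?thesis
      using that[of K] False \<open>e > 0\<close>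
      by (auto simp: emeasure_eq_measure sets_eq_borel compact_imp_closed ennreal_less_iff)
  qed
  obtain U where U: "open U" "B \<subseteq> U" "measure \<mu> U < measure \<mu> B + e/2"
  proof -
    have "(INF U \<in> {U. B \<subseteq> U \<and> open U}. emeasure \<mu> U) = emeasure \<mu> B"
      by (rule outer_regular[OF sets_eq_borel fin B, symmetric])
    also have "\<dots> < ennreal (measure \<mu> B + e/2)"
      using \<open>e > 0\<close> by (simp add: emeasure_eq_measure sets_eq_borel B ennreal_less_iff)
    finally obtain U where "B \<subseteq> U" "open U" "emeasure \<mu> U < ennreal (measure \<mu> B + e/2)"
      by (auto simp: INF_less_iff)
    then show ?thesis
      using that[of U] by (auto simp: emeasure_eq_measure sets_eq_borel ennreal_less_iff)
  qed
  have "measure \<mu> U - measure \<mu> K < e"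
    using K(3) U(3) by simp
  with K(1,2) U(1,2) show thesis
    by (rule that)
qed

lemma indicator_approx_continuous:
  assumes B: "B \<in> sets borel" and "e > 0"
  obtains \<phi> :: "real^'n \<Rightarrow> real"
  where "continuous_on UNIV \<phi>" "\<And>x. 0 \<le> \<phi> x \<and> \<phi> x \<le> 1"
    "(\<integral>y. (indicator B y - \<phi> y)\<^sup>2 \<partial>\<mu>) < e"
proof -
  obtain K U where K: "compact K" "K \<subseteq> B" and U: "open U" "B \<subseteq> U"
    and small: "measure \<mu> U - measure \<mu> K < e"
    by (rule compact_open_approx[OF B \<open>e > 0\<close>])
  have "closed K" "closed (- U)" "K \<inter> - U = {}"
    using K U by (auto simp: compact_imp_closed)
  then obtain \<phi> :: "real^'n \<Rightarrow> real" where \<phi>: "continuous_on UNIV \<phi>"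
    "\<And>x. \<phi> x \<in> closed_segment 1 0" "\<And>x. x \<in> K \<Longrightarrow> \<phi> x = 1" "\<And>x. x \<in> - U \<Longrightarrow> \<phi> x = 0"
    using Urysohn[of K "- U" 1 0] by blast
  have \<phi>01: "0 \<le> \<phi> x \<and> \<phi> x \<le> 1" for x
    using \<phi>(2)[of x] by (simp add: closed_segment_eq_real_ivl)
  have [measurable]: "\<phi> \<in> borel_measurable borel" "K \<in> sets borel" "U \<in> sets borel"
    using \<phi>(1) \<open>closed K\<close> \<open>open U\<close> by (auto intro: borel_measurable_continuous_onI)
  have "(\<integral>y. (indicator B y - \<phi> y)\<^sup>2 \<partial>\<mu>) \<le> (\<integral>y. indicator (U - K) y \<partial>\<mu>)"
  proof (rule integral_mono')
    show "integrable \<mu> (indicator (U - K) :: _ \<Rightarrow> real)"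
      by (simp add: sets_eq_borel less_top[symmetric])
    show "(indicator B y - \<phi> y)\<^sup>2 \<le> indicator (U - K) y" for y
      using \<phi>01[of y] \<phi>(3)[of y] \<phi>(4)[of y] K(2) U(2)
      by (cases "y \<in> B"; cases "y \<in> U"; cases "y \<in> K") (auto simp: power_le_one abs_le_square_iff)
  qed simp
  also have "\<dots> = measure \<mu> U - measure \<mu> K"
    using K(2) U(2) by (simp add: sets_eq_borel finite_measure_Diff)
  finally have "(\<integral>y. (indicator B y - \<phi> y)\<^sup>2 \<partial>\<mu>) < e"
    using small by linarith
  with \<phi>(1) \<phi>01 show ?thesis
    by (rule that)
qed

lemma L2_avg_error_tendsto_indicator:
  assumes "B \<in> sets borel"
  shows "(\<lambda>k. L2_avg_error k (indicator B)) \<longlonglongrightarrow> 0"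
proof (rule L2_avg_error_tendsto_approx)
  show "square_integrable (indicator B)"
    using assms by (intro square_integrable_bounded[of _ 1]) auto
  fix e :: real assume "e > 0"
  then obtain \<phi> where cont: "continuous_on UNIV \<phi>" and range: "\<And>x. 0 \<le> \<phi> x \<and> \<phi> x \<le> 1"
    and close: "(\<integral>y. (indicator B y - \<phi> y)\<^sup>2 \<partial>\<mu>) < e"
    using indicator_approx_continuous[OF assms] by blast
  have bounded: "\<bar>\<phi> x\<bar> \<le> 1" for x
    using range[of x] by simp
  show "\<exists>s. square_integrable s \<and> (\<lambda>k. L2_avg_error k s) \<longlonglongrightarrow> 0
      \<and> (\<integral>y. (indicator B y - s y)\<^sup>2 \<partial>\<mu>) < e"
    using square_integrable_bounded[OF borel_measurable_continuous_onI[OF cont] bounded]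
      L2_avg_error_tendsto_continuous[OF cont bounded] close by blast
qed

lemma L2_avg_error_tendsto_simple:
  assumes s: "simple_function borel s"
  shows "square_integrable s \<and> (\<lambda>k. L2_avg_error k s) \<longlonglongrightarrow> 0"
proof -
  have "(\<lambda>y. \<Sum>v\<in>s ` UNIV. v * indicator (s -` {v}) y) = s"
  proof
    fix y
    have repr: "s y = (\<Sum>v\<in>s ` UNIV. indicator (s -` {v}) y *\<^sub>R v)"
      using simple_function_indicator_representation_banach[OF s, of y]
      by (simp only: space_borel Int_UNIV_right UNIV_I simp_thms)
    have "(\<Sum>v\<in>s ` UNIV. indicator (s -` {v}) y *\<^sub>R v) = (\<Sum>v\<in>s ` UNIV. v * indicator (s -` {v}) y)"
      by (simp add: mult.commute)
    then show "(\<Sum>v\<in>s ` UNIV. v * indicator (s -` {v}) y) = s y"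
      by (simp only: repr)
  qed
  moreover have "finite (s ` UNIV)"
    using simple_functionD(1)[OF s] by simp
  moreover have "square_integrable (\<lambda>y. v * indicator (s -` {v}) y)
      \<and> (\<lambda>k. L2_avg_error k (\<lambda>y. v * indicator (s -` {v}) y)) \<longlonglongrightarrow> 0" for v
  proof -
    have "s -` {v} \<in> sets borel"
      using simple_functionD(2)[OF s, of "{v}"] by simp
    then have "square_integrable (indicator (s -` {v}))"
      by (intro square_integrable_bounded[of _ 1]) auto
    then show ?thesis
      using L2_avg_error_tendsto_indicator[OF \<open>s -` {v} \<in> sets borel\<close>]
      by (simp add: square_integrable_mult_left L2_avg_error_mult_left tendsto_mult_right_zero)
  qed
  ultimately show ?thesis
    using L2_avg_error_tendsto_sum[of "s ` UNIV" "\<lambda>v y. v * indicator (s -` {v}) y"] by (simp only:)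
qed

lemma simple_function_approx_L2:
  assumes f: "square_integrable f" and "e > 0"
  obtains s where "simple_function borel s" "(\<integral>y. (f y - s y)\<^sup>2 \<partial>\<mu>) < e"
proof -
  have [measurable]: "f \<in> borel_measurable borel"
    using f by (simp add: square_integrable_def)
  obtain F where F: "\<And>i. simple_function borel (F i)" "\<And>x. (\<lambda>i. F i x) \<longlonglongrightarrow> f x"
    "\<And>i x. \<bar>F i x\<bar> \<le> 2 * \<bar>f x\<bar>"
    using borel_measurable_implies_sequence_metric[of f borel 0] by auto
  have [measurable]: "F i \<in> borel_measurable borel" for i
    using F(1) by (rule borel_measurable_simple_function)
  have "(\<lambda>i. \<integral>y. (f y - F i y)\<^sup>2 \<partial>\<mu>) \<longlonglongrightarrow> (\<integral>y. 0 \<partial>\<mu>)"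
  proof (rule integral_dominated_convergence[where w="\<lambda>y. 9 * (f y)\<^sup>2"])
    show "integrable \<mu> (\<lambda>y. 9 * (f y)\<^sup>2)"
      using f by (simp add: square_integrable_def)
    show "AE y in \<mu>. (\<lambda>i. (f y - F i y)\<^sup>2) \<longlonglongrightarrow> 0"
    proof (intro AE_I2)
      fix y
      have "(\<lambda>i. (f y - F i y)\<^sup>2) \<longlonglongrightarrow> (f y - f y)\<^sup>2"
        using F(2)[of y] by (intro tendsto_intros)
      then show "(\<lambda>i. (f y - F i y)\<^sup>2) \<longlonglongrightarrow> 0"
        by simp
    qed
    show "AE y in \<mu>. norm ((f y - F i y)\<^sup>2) \<le> 9 * (f y)\<^sup>2" for i
    proof (intro AE_I2)
      fix y
      have "\<bar>f y - F i y\<bar> \<le> 3 * \<bar>f y\<bar>"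
        using F(3)[of i y] by linarith
      from power_mono[OF this abs_ge_zero, of 2] show "norm ((f y - F i y)\<^sup>2) \<le> 9 * (f y)\<^sup>2"
        by (simp add: power_mult_distrib)
    qed
  qed measurable
  then have "\<forall>\<^sub>F i in sequentially. (\<integral>y. (f y - F i y)\<^sup>2 \<partial>\<mu>) < e"
    using \<open>e > 0\<close> by (intro order_tendstoD(2)) simp_all
  then obtain i where "(\<integral>y. (f y - F i y)\<^sup>2 \<partial>\<mu>) < e"
    by (auto simp: eventually_sequentially)
  with F(1) show thesis
    by (rule that)
qed

theorem L2_avg_error_tendsto:
  assumes f: "square_integrable f"
  shows "(\<lambda>k. L2_avg_error k f) \<longlonglongrightarrow> 0"
proof (rule L2_avg_error_tendsto_approx[OF f])
  fix e :: real assume "e > 0"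
  then obtain s where "simple_function borel s" "(\<integral>y. (f y - s y)\<^sup>2 \<partial>\<mu>) < e"
    by (rule simple_function_approx_L2[OF f])
  then show "\<exists>s. square_integrable s \<and> (\<lambda>k. L2_avg_error k s) \<longlonglongrightarrow> 0 \<and> (\<integral>y. (f y - s y)\<^sup>2 \<partial>\<mu>) < e"
    using L2_avg_error_tendsto_simple by blast
qed

end

section \<open>The regression problem\<close>

lemma
  shows borel_measurable_fst[measurable]: "fst \<in> borel_measurable (borel :: ('a::topological_space \<times> 'b::topological_space) measure)"
    and borel_measurable_snd[measurable]: "snd \<in> borel_measurable (borel :: ('a \<times> 'b) measure)"
  by (intro borel_measurable_continuous_onI continuous_intros)+

lemma borel_measurable_Zt[measurable]: "Zt t \<in> borel_measurable borel"
  unfolding Zt_def case_prod_beta' by (intro borel_measurable_continuous_onI continuous_intros)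

lemma borel_measurable_Udisp[measurable]: "Udisp \<in> borel_measurable borel"
  unfolding Udisp_def case_prod_beta' by (intro borel_measurable_continuous_onI continuous_intros)

locale coupling = prob_space \<gamma>
  for \<gamma> :: "((real^'n) \<times> (real^'n)) measure" +
  fixes t :: real and vstar :: "real^'n \<Rightarrow> real^'n"
  assumes sets_eq_borel[measurable_cong]: "sets \<gamma> = sets borel"
    and integrable_norm_fst_square: "integrable \<gamma> (\<lambda>(x, y). (norm x)\<^sup>2)"
    and integrable_norm_snd_square: "integrable \<gamma> (\<lambda>(x, y). (norm y)\<^sup>2)"
    and bayes_regressor: "bayes_regressor \<gamma> t vstar"
begin

lemma space_eq_UNIV[simp]: "space \<gamma> = UNIV"
  using sets_eq_imp_space_eq[OF sets_eq_borel] by simp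

lemma borel_measurable_vstar[measurable]: "vstar \<in> borel_measurable borel"
  using bayes_regressor by (simp add: bayes_regressor_def)

lemma space_sigZ[simp]: "space (sigZ \<gamma> t) = UNIV"
  by (simp add: sigZ_def)

lemma subalgebra_sigZ: "subalgebra \<gamma> (sigZ \<gamma> t)"
  unfolding subalgebra_def sigZ_def
  using measurable_sets[OF borel_measurable_Zt] by (auto simp: sets_vimage_algebra2 sets_eq_borel)

lemma sigma_finite_subalgebra_sigZ: "sigma_finite_subalgebra \<gamma> (sigZ \<gamma> t)"
  using subalgebra_sigZ
  by (intro finite_measure_subalgebra_is_sigma_finite finite_measure_subalgebra.intro
      finite_measure_subalgebra_axioms.intro finite_measure_axioms)

lemma measurable_sigZ_comp:
  "h \<in> borel_measurable borel \<Longrightarrow> (\<lambda>\<omega>. h (Zt t \<omega>)) \<in> borel_measurable (sigZ \<gamma> t)"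
  unfolding sigZ_def by (rule measurable_compose[OF measurable_vimage_algebra1]) simp_all

lemma sets_sigZE:
  assumes "A \<in> sets (sigZ \<gamma> t)"
  obtains B where "B \<in> sets borel" "A = Zt t -` B"
  using assms unfolding sigZ_def by (auto simp: sets_vimage_algebra2)

lemma integrable_norm_Udisp_square: "integrable \<gamma> (\<lambda>\<omega>. (norm (Udisp \<omega>))\<^sup>2)"
proof -
  have "integrable \<gamma> (\<lambda>\<omega>. (norm (snd \<omega> - fst \<omega>))\<^sup>2)"
    using integrable_norm_fst_square integrable_norm_snd_square
    by (intro integrable_norm_diff_square) (simp_all add: case_prod_beta')
  then show ?thesis
    by (simp add: Udisp_def case_prod_beta)
qed

lemma integrable_Udisp_component: "integrable \<gamma> (\<lambda>\<omega>. Udisp \<omega> $ i)"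
  by (rule square_integrable_imp_integrable[OF _ integrable_component_square[OF _ integrable_norm_Udisp_square]])
    simp_all

lemma vstar_Zt_AE: "AE \<omega> in \<gamma>. vstar (Zt t \<omega>) = cond_exp_vec \<gamma> (sigZ \<gamma> t) Udisp \<omega>"
  using bayes_regressor by (simp add: bayes_regressor_def)

lemma vstar_Zt_component_AE:
  "AE \<omega> in \<gamma>. vstar (Zt t \<omega>) $ i = real_cond_exp \<gamma> (sigZ \<gamma> t) (\<lambda>\<omega>. Udisp \<omega> $ i) \<omega>"
  using vstar_Zt_AE by eventually_elim (simp add: cond_exp_vec_def)

lemma integrable_vstar_component_square: "integrable \<gamma> (\<lambda>\<omega>. (vstar (Zt t \<omega>) $ i)\<^sup>2)"
proof -
  have int: "integrable \<gamma> (\<lambda>\<omega>. (real_cond_exp \<gamma> (sigZ \<gamma> t) (\<lambda>\<omega>. Udisp \<omega> $ i) \<omega>)\<^sup>2)"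
    using integrable_component_square[OF _ integrable_norm_Udisp_square]
    by (intro sigma_finite_subalgebra.integrable_convex_cond_exp[OF sigma_finite_subalgebra_sigZ
          integrable_Udisp_component, where I=UNIV]) (auto intro: convex_power2)
  have AE: "AE \<omega> in \<gamma>. (real_cond_exp \<gamma> (sigZ \<gamma> t) (\<lambda>\<omega>. Udisp \<omega> $ i) \<omega>)\<^sup>2 = (vstar (Zt t \<omega>) $ i)\<^sup>2"
    using vstar_Zt_component_AE[of i] by eventually_elim simp
  show ?thesis
    by (rule integrable_cong_AE_imp[OF int _ AE]) measurable
qed

lemma integrable_norm_vstar_square: "integrable \<gamma> (\<lambda>\<omega>. (norm (vstar (Zt t \<omega>)))\<^sup>2)"
  using integrable_vstar_component_square by (simp add: power2_norm_eq_sum_components)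

lemma
  assumes hF: "h \<in> borel_measurable (sigZ \<gamma> t)" and h2: "integrable \<gamma> (\<lambda>\<omega>. (h \<omega>)\<^sup>2)"
  shows integrable_mult_vstar_component: "integrable \<gamma> (\<lambda>\<omega>. h \<omega> * vstar (Zt t \<omega>) $ i)"
    and integral_mult_vstar_component:
      "(\<integral>\<omega>. h \<omega> * vstar (Zt t \<omega>) $ i \<partial>\<gamma>) = (\<integral>\<omega>. h \<omega> * Udisp \<omega> $ i \<partial>\<gamma>)"
proof -
  have [measurable]: "h \<in> borel_measurable \<gamma>"
    using measurable_from_subalg[OF subalgebra_sigZ hF] .
  have "integrable \<gamma> (\<lambda>\<omega>. h \<omega> * Udisp \<omega> $ i)"
    using h2 integrable_component_square[OF _ integrable_norm_Udisp_square]
    by (intro integrable_mult_of_square_integrable) simp_all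
  note tower = sigma_finite_subalgebra.real_cond_exp_intg[OF sigma_finite_subalgebra_sigZ this hF]
  have AE: "AE \<omega> in \<gamma>. h \<omega> * real_cond_exp \<gamma> (sigZ \<gamma> t) (\<lambda>\<omega>. Udisp \<omega> $ i) \<omega> = h \<omega> * vstar (Zt t \<omega>) $ i"
    using vstar_Zt_component_AE[of i] by eventually_elim simp
  show "integrable \<gamma> (\<lambda>\<omega>. h \<omega> * vstar (Zt t \<omega>) $ i)"
    by (rule integrable_cong_AE_imp[OF tower(1) _ AE]) simp_all
  have "(\<integral>\<omega>. h \<omega> * vstar (Zt t \<omega>) $ i \<partial>\<gamma>) = (\<integral>\<omega>. h \<omega> * real_cond_exp \<gamma> (sigZ \<gamma> t) (\<lambda>\<omega>. Udisp \<omega> $ i) \<omega> \<partial>\<gamma>)"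
    using AE by (intro integral_cong_AE) (auto elim: AE_mp)
  then show "(\<integral>\<omega>. h \<omega> * vstar (Zt t \<omega>) $ i \<partial>\<gamma>) = (\<integral>\<omega>. h \<omega> * Udisp \<omega> $ i \<partial>\<gamma>)"
    using tower(2) by simp
qed

lemma integral_indicator_scaleR_vstar:
  assumes A: "A \<in> sets (sigZ \<gamma> t)"
  shows "(\<integral>\<omega>. indicator A \<omega> *\<^sub>R vstar (Zt t \<omega>) \<partial>\<gamma>) = (\<integral>\<omega>. indicator A \<omega> *\<^sub>R Udisp \<omega> \<partial>\<gamma>)"
proof -
  have [measurable]: "A \<in> sets \<gamma>"
    using A subalgebra_sigZ by (auto simp: subalgebra_def)
  have AF: "indicator A \<in> borel_measurable (sigZ \<gamma> t)"
    using A by simp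
  have A2: "integrable \<gamma> (\<lambda>\<omega>. (indicator A \<omega> :: real)\<^sup>2)"
    by (rule integrable_const_bound[of _ 1]) (auto split: split_indicator)
  have int: "integrable \<gamma> (\<lambda>\<omega>. indicator A \<omega> *\<^sub>R vstar (Zt t \<omega>))"
    "integrable \<gamma> (\<lambda>\<omega>. indicator A \<omega> *\<^sub>R Udisp \<omega>)"
    using integrable_of_norm_square[OF _ integrable_norm_vstar_square]
      integrable_of_norm_square[OF _ integrable_norm_Udisp_square]
    by (auto intro: integrable_mult_indicator)
  show ?thesis
  proof (rule vec_eq_iff[THEN iffD2], intro allI)
    fix i
    show "(\<integral>\<omega>. indicator A \<omega> *\<^sub>R vstar (Zt t \<omega>) \<partial>\<gamma>) $ i = (\<integral>\<omega>. indicator A \<omega> *\<^sub>R Udisp \<omega> \<partial>\<gamma>) $ i"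
      using integral_bounded_linear[OF bounded_linear_vec_nth int(1), of i]
        integral_bounded_linear[OF bounded_linear_vec_nth int(2), of i]
        integral_mult_vstar_component[OF AF A2, of i]
      by simp
  qed
qed

definition bayes_risk :: real where
  "bayes_risk = (\<integral>\<omega>. (norm (Udisp \<omega> - vstar (Zt t \<omega>)))\<^sup>2 \<partial>\<gamma>)"

lemma
  assumes [measurable]: "h \<in> borel_measurable borel" and h2: "integrable \<gamma> (\<lambda>\<omega>. (norm (h (Zt t \<omega>)))\<^sup>2)"
  shows integrable_residual_component:
      "integrable \<gamma> (\<lambda>\<omega>. h (Zt t \<omega>) $ i * (vstar (Zt t \<omega>) - Udisp \<omega>) $ i)"
    and integral_residual_component:
      "(\<integral>\<omega>. h (Zt t \<omega>) $ i * (vstar (Zt t \<omega>) - Udisp \<omega>) $ i \<partial>\<gamma>) = 0"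
proof -
  have "(\<lambda>z. h z $ i) \<in> borel_measurable borel"
    by measurable
  then have hF: "(\<lambda>\<omega>. h (Zt t \<omega>) $ i) \<in> borel_measurable (sigZ \<gamma> t)"
    by (rule measurable_sigZ_comp)
  have h2i: "integrable \<gamma> (\<lambda>\<omega>. (h (Zt t \<omega>) $ i)\<^sup>2)"
    using integrable_component_square[OF _ h2] by simp
  have hU: "integrable \<gamma> (\<lambda>\<omega>. h (Zt t \<omega>) $ i * Udisp \<omega> $ i)"
    using h2i integrable_component_square[OF _ integrable_norm_Udisp_square]
    by (intro integrable_mult_of_square_integrable) simp_all
  have "h (Zt t \<omega>) $ i * (vstar (Zt t \<omega>) - Udisp \<omega>) $ i
      = h (Zt t \<omega>) $ i * vstar (Zt t \<omega>) $ i - h (Zt t \<omega>) $ i * Udisp \<omega> $ i" for \<omega>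
    by (simp add: algebra_simps)
  then show "integrable \<gamma> (\<lambda>\<omega>. h (Zt t \<omega>) $ i * (vstar (Zt t \<omega>) - Udisp \<omega>) $ i)"
    and "(\<integral>\<omega>. h (Zt t \<omega>) $ i * (vstar (Zt t \<omega>) - Udisp \<omega>) $ i \<partial>\<gamma>) = 0"
    using integrable_mult_vstar_component[OF hF h2i, of i] integral_mult_vstar_component[OF hF h2i, of i] hU
    by simp_all
qed

lemma loss_eq_bayes_risk_plus:
  assumes [measurable]: "v \<in> borel_measurable borel" and v2: "integrable \<gamma> (\<lambda>\<omega>. (norm (v (Zt t \<omega>)))\<^sup>2)"
  shows "loss \<gamma> t v = ennreal ((\<integral>\<omega>. (norm (v (Zt t \<omega>) - vstar (Zt t \<omega>)))\<^sup>2 \<partial>\<gamma>) + bayes_risk)"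
proof -
  define a where "a \<omega> = v (Zt t \<omega>) - vstar (Zt t \<omega>)" for \<omega>
  define b where "b \<omega> = vstar (Zt t \<omega>) - Udisp \<omega>" for \<omega>
  have [measurable]: "a \<in> borel_measurable \<gamma>" "b \<in> borel_measurable \<gamma>"
    unfolding a_def b_def by measurable
  have a2: "integrable \<gamma> (\<lambda>\<omega>. (norm (a \<omega>))\<^sup>2)"
    unfolding a_def using v2 integrable_norm_vstar_square by (intro integrable_norm_diff_square) simp_all
  have b2: "integrable \<gamma> (\<lambda>\<omega>. (norm (b \<omega>))\<^sup>2)"
    unfolding b_def using integrable_norm_vstar_square integrable_norm_Udisp_square
    by (intro integrable_norm_diff_square) simp_all
  have cross: "integrable \<gamma> (\<lambda>\<omega>. a \<omega> $ i * b \<omega> $ i) \<and> (\<integral>\<omega>. a \<omega> $ i * b \<omega> $ i \<partial>\<gamma>) = 0" for i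
    using integrable_residual_component[of "\<lambda>z. v z - vstar z"] integral_residual_component[of "\<lambda>z. v z - vstar z"] a2
    by (simp add: a_def b_def)
  have expand: "(\<lambda>\<omega>. (norm (v (Zt t \<omega>) - Udisp \<omega>))\<^sup>2)
      = (\<lambda>\<omega>. (norm (a \<omega>))\<^sup>2 + (norm (b \<omega>))\<^sup>2 + 2 * (\<Sum>i\<in>UNIV. a \<omega> $ i * b \<omega> $ i))"
  proof
    fix \<omega>
    have "v (Zt t \<omega>) - Udisp \<omega> = a \<omega> + b \<omega>"
      by (simp add: a_def b_def)
    moreover have "(norm (x + y))\<^sup>2 = (norm x)\<^sup>2 + (norm y)\<^sup>2 + 2 * (x \<bullet> y)" for x y :: "real^'n"
      by (simp add: power2_norm_eq_inner inner_add inner_commute)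
    ultimately show "(norm (v (Zt t \<omega>) - Udisp \<omega>))\<^sup>2
        = (norm (a \<omega>))\<^sup>2 + (norm (b \<omega>))\<^sup>2 + 2 * (\<Sum>i\<in>UNIV. a \<omega> $ i * b \<omega> $ i)"
      by (simp add: inner_vec_def)
  qed
  have "integrable \<gamma> (\<lambda>\<omega>. (norm (v (Zt t \<omega>) - Udisp \<omega>))\<^sup>2)"
    unfolding expand using a2 b2 cross by simp
  moreover have "(\<integral>\<omega>. (norm (v (Zt t \<omega>) - Udisp \<omega>))\<^sup>2 \<partial>\<gamma>) = (\<integral>\<omega>. (norm (a \<omega>))\<^sup>2 \<partial>\<gamma>) + bayes_risk"
    unfolding expand using a2 b2 cross by (simp add: bayes_risk_def b_def norm_minus_commute)
  ultimately show ?thesis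
    unfolding loss_def by (simp add: a_def nn_integral_eq_integral)
qed

lemma loss_vstar: "loss \<gamma> t vstar = ennreal bayes_risk"
  using loss_eq_bayes_risk_plus[OF borel_measurable_vstar integrable_norm_vstar_square] by simp

lemma bayes_risk_le_loss:
  assumes [measurable]: "v \<in> borel_measurable borel"
  shows "ennreal bayes_risk \<le> loss \<gamma> t v"
proof (cases "loss \<gamma> t v = \<infinity>")
  case False
  then have "integrable \<gamma> (\<lambda>\<omega>. (norm (v (Zt t \<omega>) - Udisp \<omega>))\<^sup>2)"
    unfolding loss_def by (intro integrableI_nonneg) (auto simp: top.not_eq_extremum)
  from integrable_norm_diff_square[OF _ _ this, of "\<lambda>\<omega>. - Udisp \<omega>"]
  have "integrable \<gamma> (\<lambda>\<omega>. (norm (v (Zt t \<omega>)))\<^sup>2)"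
    using integrable_norm_Udisp_square by simp
  then show ?thesis
    by (simp add: loss_eq_bayes_risk_plus ennreal_leI)
qed simp

lemma INF_loss: "(INF v \<in> borel_measurable borel. loss \<gamma> t v) = ennreal bayes_risk"
proof (rule antisym)
  show "(INF v \<in> borel_measurable borel. loss \<gamma> t v) \<le> ennreal bayes_risk"
    unfolding loss_vstar[symmetric] by (rule INF_lower) simp
qed (rule INF_greatest, rule bayes_risk_le_loss)

lemma integral_cond_var: "(\<integral>\<omega>. cond_var \<gamma> t \<omega> \<partial>\<gamma>) = bayes_risk"
proof -
  define D where "D \<omega> = (\<Sum>i\<in>UNIV. (Udisp \<omega> $ i - real_cond_exp \<gamma> (sigZ \<gamma> t) (\<lambda>\<omega>. Udisp \<omega> $ i) \<omega>)\<^sup>2)" for \<omega>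
  have D: "(\<lambda>\<omega>. (norm (Udisp \<omega> - cond_exp_vec \<gamma> (sigZ \<gamma> t) Udisp \<omega>))\<^sup>2) = D"
    by (simp add: fun_eq_iff D_def cond_exp_vec_def power2_norm_eq_sum_components)
  have [measurable]: "D \<in> borel_measurable \<gamma>"
    unfolding D_def by measurable
  have AE: "AE \<omega> in \<gamma>. (norm (Udisp \<omega> - vstar (Zt t \<omega>)))\<^sup>2 = D \<omega>"
    using vstar_Zt_AE by eventually_elim (simp add: D[symmetric])
  have "integrable \<gamma> (\<lambda>\<omega>. (norm (Udisp \<omega> - vstar (Zt t \<omega>)))\<^sup>2)"
    using integrable_norm_Udisp_square integrable_norm_vstar_square
    by (intro integrable_norm_diff_square) simp_all
  then have "integrable \<gamma> D"
    by (rule integrable_cong_AE_imp[OF _ _ AE]) simp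
  then have "(\<integral>\<omega>. cond_var \<gamma> t \<omega> \<partial>\<gamma>) = (\<integral>\<omega>. D \<omega> \<partial>\<gamma>)"
    unfolding cond_var_def D by (rule sigma_finite_subalgebra.real_cond_exp_int(2)[OF sigma_finite_subalgebra_sigZ])
  also have "\<dots> = bayes_risk"
    unfolding bayes_risk_def using AE by (intro integral_cong_AE[symmetric]) simp_all
  finally show ?thesis .
qed

end

section \<open>Equivariance of the Bayes regressor\<close>

lemma borel_measurable_matrix_vector_mult[measurable (raw)]:
  fixes A :: "real^'n^'m"
  shows "f \<in> borel_measurable M \<Longrightarrow> (\<lambda>x. A *v f x) \<in> borel_measurable M"
  by (rule measurable_compose[OF _ borel_measurable_continuous_onI[OF
        linear_continuous_on[OF matrix_vector_mul_bounded_linear]]])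

lemma orthogonal_transformation_matrix_vector_mult:
  fixes g :: "real^'n^'n"
  shows "orthogonal_matrix g \<Longrightarrow> orthogonal_transformation ((*v) g)"
  unfolding orthogonal_transformation_matrix by (simp add: matrix_vector_mul_linear)

definition diagonal_action :: "real^'n^'n \<Rightarrow> (real^'n) \<times> (real^'n) \<Rightarrow> (real^'n) \<times> (real^'n)" where
  "diagonal_action g = (\<lambda>(x, y). (g *v x, g *v y))"

lemma borel_measurable_diagonal_action[measurable]: "diagonal_action g \<in> borel_measurable borel"
  unfolding diagonal_action_def case_prod_beta'
  by (intro borel_measurable_continuous_onI continuous_on_Pair linear_continuous_on
      bounded_linear_compose[OF matrix_vector_mul_bounded_linear] bounded_linear_fst bounded_linear_snd)

lemma Zt_diagonal_action: "Zt t (diagonal_action g \<omega>) = g *v Zt t \<omega>"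
  by (cases \<omega>) (simp add: Zt_def diagonal_action_def matrix_vector_right_distrib matrix_vector_mult_scaleR)

lemma Udisp_diagonal_action: "Udisp (diagonal_action g \<omega>) = g *v Udisp \<omega>"
  by (cases \<omega>) (simp add: Udisp_def diagonal_action_def matrix_vector_mult_diff_distrib)

context coupling
begin

lemma integrable_indicator_Zt_scaleR:
  fixes F :: "_ \<Rightarrow> 'b::{banach, second_countable_topology}"
  assumes "B \<in> sets borel" and "integrable \<gamma> F"
  shows "integrable \<gamma> (\<lambda>\<omega>. indicator B (Zt t \<omega>) *\<^sub>R F \<omega>)"
proof -
  have "Zt t -` B \<in> sets \<gamma>"
    using measurable_sets[of "Zt t" \<gamma> borel B] assms(1) by simp
  then show ?thesis
    using integrable_mult_indicator[OF _ assms(2), of "Zt t -` B"] by (simp add: indicator_def)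
qed

lemma
  fixes g :: "real^'n^'n" and \<phi> :: "_ \<Rightarrow> 'b::{banach, second_countable_topology}"
  assumes invariant: "distr \<gamma> borel (diagonal_action g) = \<gamma>"
    and [measurable]: "\<phi> \<in> borel_measurable borel"
  shows integral_diagonal_action: "(\<integral>\<omega>. \<phi> (diagonal_action g \<omega>) \<partial>\<gamma>) = (\<integral>\<omega>. \<phi> \<omega> \<partial>\<gamma>)"
    and integrable_diagonal_action: "integrable \<gamma> (\<lambda>\<omega>. \<phi> (diagonal_action g \<omega>)) \<longleftrightarrow> integrable \<gamma> \<phi>"
  using integral_distr[of "diagonal_action g" \<gamma> borel \<phi>] integrable_distr_eq[of "diagonal_action g" \<gamma> borel \<phi>]
  by (simp_all add: invariant)

lemma integrable_vstar_equivariant: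
  fixes g :: "real^'n^'n"
  assumes invariant: "distr \<gamma> borel (diagonal_action g) = \<gamma>"
  shows "integrable \<gamma> (\<lambda>\<omega>. vstar (g *v Zt t \<omega>))"
proof -
  have "(\<lambda>\<omega>. vstar (Zt t \<omega>)) \<in> borel_measurable borel"
    by measurable
  moreover have "integrable \<gamma> (\<lambda>\<omega>. vstar (Zt t \<omega>))"
    by (rule integrable_of_norm_square[OF _ integrable_norm_vstar_square]) measurable
  ultimately have "integrable \<gamma> (\<lambda>\<omega>. vstar (Zt t (diagonal_action g \<omega>)))"
    using integrable_diagonal_action[OF invariant] by blast
  then show ?thesis
    by (simp only: Zt_diagonal_action)
qed

lemma integral_indicator_scaleR_vstar_equivariant:
  fixes g :: "real^'n^'n"
  assumes g: "orthogonal_matrix g" and invariant: "distr \<gamma> borel (diagonal_action g) = \<gamma>"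
    and [measurable]: "B \<in> sets borel"
  shows "(\<integral>\<omega>. indicator B (Zt t \<omega>) *\<^sub>R vstar (g *v Zt t \<omega>) \<partial>\<gamma>)
    = g *v (\<integral>\<omega>. indicator B (Zt t \<omega>) *\<^sub>R Udisp \<omega> \<partial>\<gamma>)"
proof -
  define h where "h = transpose g"
  have "h ** g = mat 1"
    using g by (simp add: h_def orthogonal_matrix_def)
  then have hg: "h *v (g *v x) = x" for x
    by (simp add: matrix_vector_mul_assoc)
  define A where "A = (\<lambda>\<omega>. h *v Zt t \<omega>) -` B"
  have A: "A \<in> sets (sigZ \<gamma> t)"
    using measurable_sets[OF measurable_sigZ_comp[of "\<lambda>z. h *v z"], of B] by (simp add: A_def)
  have ind: "indicator B (h *v Zt t \<omega>) = (indicator A \<omega> :: real)" for \<omega>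
    by (simp add: A_def indicator_def)
  \<comment> \<open>move the test set with \<open>g\<^sup>T\<close>, apply the tower property, and move back\<close>
  have "(\<integral>\<omega>. indicator B (Zt t \<omega>) *\<^sub>R vstar (g *v Zt t \<omega>) \<partial>\<gamma>)
      = (\<integral>\<omega>. indicator B (h *v Zt t \<omega>) *\<^sub>R vstar (Zt t \<omega>) \<partial>\<gamma>)"
    using integral_diagonal_action[OF invariant, of "\<lambda>\<omega>. indicator B (h *v Zt t \<omega>) *\<^sub>R vstar (Zt t \<omega>)"]
    by (simp add: Zt_diagonal_action hg)
  also have "\<dots> = (\<integral>\<omega>. indicator B (h *v Zt t \<omega>) *\<^sub>R Udisp \<omega> \<partial>\<gamma>)"
    using integral_indicator_scaleR_vstar[OF A] by (simp add: ind)
  also have "\<dots> = (\<integral>\<omega>. g *v (indicator B (Zt t \<omega>) *\<^sub>R Udisp \<omega>) \<partial>\<gamma>)"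
    using integral_diagonal_action[OF invariant, of "\<lambda>\<omega>. indicator B (h *v Zt t \<omega>) *\<^sub>R Udisp \<omega>"]
    by (simp add: Zt_diagonal_action Udisp_diagonal_action hg matrix_vector_mult_scaleR)
  also have "\<dots> = g *v (\<integral>\<omega>. indicator B (Zt t \<omega>) *\<^sub>R Udisp \<omega> \<partial>\<gamma>)"
    using integrable_of_norm_square[OF _ integrable_norm_Udisp_square]
    by (intro integral_bounded_linear matrix_vector_mul_bounded_linear integrable_indicator_Zt_scaleR) auto
  finally show ?thesis .
qed

lemma real_cond_exp_Udisp_equivariant_AE:
  fixes g :: "real^'n^'n"
  assumes g: "orthogonal_matrix g" and invariant: "distr \<gamma> borel (diagonal_action g) = \<gamma>"
  shows "AE \<omega> in \<gamma>. real_cond_exp \<gamma> (sigZ \<gamma> t) (\<lambda>\<omega>. Udisp \<omega> $ i) \<omega>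
    = (transpose g *v vstar (g *v Zt t \<omega>)) $ i"
proof (rule sigma_finite_subalgebra.real_cond_exp_charact[OF sigma_finite_subalgebra_sigZ])
  define h where "h = transpose g"
  have "h ** g = mat 1"
    using g by (simp add: h_def orthogonal_matrix_def)
  then have hg: "h *v (g *v x) = x" for x
    by (simp add: matrix_vector_mul_assoc)
  have w_int: "integrable \<gamma> (\<lambda>\<omega>. h *v vstar (g *v Zt t \<omega>))"
    by (intro integrable_bounded_linear[OF matrix_vector_mul_bounded_linear]
        integrable_vstar_equivariant[OF invariant])
  then show "integrable \<gamma> (\<lambda>\<omega>. (transpose g *v vstar (g *v Zt t \<omega>)) $ i)"
    unfolding h_def by (rule integrable_bounded_linear[OF bounded_linear_vec_nth])
  show "(\<lambda>\<omega>. (transpose g *v vstar (g *v Zt t \<omega>)) $ i) \<in> borel_measurable (sigZ \<gamma> t)"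
    by (rule measurable_sigZ_comp) measurable
  fix A assume "A \<in> sets (sigZ \<gamma> t)"
  then obtain B where [measurable]: "B \<in> sets borel" and A: "A = Zt t -` B"
    by (rule sets_sigZE)
  note int = integrable_indicator_Zt_scaleR[OF \<open>B \<in> sets borel\<close>]
  have "(\<integral>\<omega>. indicator B (Zt t \<omega>) *\<^sub>R Udisp \<omega> \<partial>\<gamma>)
      = h *v (\<integral>\<omega>. indicator B (Zt t \<omega>) *\<^sub>R vstar (g *v Zt t \<omega>) \<partial>\<gamma>)"
    by (simp add: integral_indicator_scaleR_vstar_equivariant[OF g invariant] hg)
  also have "\<dots> = (\<integral>\<omega>. indicator B (Zt t \<omega>) *\<^sub>R (h *v vstar (g *v Zt t \<omega>)) \<partial>\<gamma>)"
    using integral_bounded_linear[OF matrix_vector_mul_bounded_linear int[OF integrable_vstar_equivariant[OF invariant]], of h]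
    by (simp add: matrix_vector_mult_scaleR)
  finally have "(\<integral>\<omega>. indicator B (Zt t \<omega>) *\<^sub>R Udisp \<omega> \<partial>\<gamma>) $ i
      = (\<integral>\<omega>. indicator B (Zt t \<omega>) *\<^sub>R (h *v vstar (g *v Zt t \<omega>)) \<partial>\<gamma>) $ i"
    by simp
  then show "(\<integral>\<omega>\<in>A. Udisp \<omega> $ i \<partial>\<gamma>) = (\<integral>\<omega>\<in>A. (transpose g *v vstar (g *v Zt t \<omega>)) $ i \<partial>\<gamma>)"
    using integral_bounded_linear[OF bounded_linear_vec_nth int[OF w_int], of i]
      integral_bounded_linear[OF bounded_linear_vec_nth
        int[OF integrable_of_norm_square[OF _ integrable_norm_Udisp_square]], of i]
    by (simp add: A set_lebesgue_integral_def indicator_def h_def)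
qed (rule integrable_Udisp_component)

lemma vstar_equivariant_AE:
  fixes g :: "real^'n^'n"
  assumes g: "orthogonal_matrix g" and invariant: "distr \<gamma> borel (diagonal_action g) = \<gamma>"
  shows "AE z in distr \<gamma> borel (Zt t). vstar (g *v z) = g *v vstar z"
proof -
  define h where "h = transpose g"
  have "g ** h = mat 1"
    using g by (simp add: h_def orthogonal_matrix_def)
  then have gh: "g *v (h *v x) = x" for x
    by (simp add: matrix_vector_mul_assoc)
  have "AE \<omega> in \<gamma>. vstar (Zt t \<omega>) $ i = (h *v vstar (g *v Zt t \<omega>)) $ i" for i
    using vstar_Zt_component_AE[of i] real_cond_exp_Udisp_equivariant_AE[OF g invariant, of i]
    unfolding h_def by eventually_elim simp
  then have "AE \<omega> in \<gamma>. vstar (Zt t \<omega>) = h *v vstar (g *v Zt t \<omega>)"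
    by (subst vec_eq_iff, subst AE_all_countable) simp
  then have "AE \<omega> in \<gamma>. vstar (g *v Zt t \<omega>) = g *v vstar (Zt t \<omega>)"
    by eventually_elim (simp only: gh)
  then show ?thesis
    by (subst AE_distr_iff) simp_all
qed

end

section \<open>Equivariant approximation of the Bayes regressor\<close>

sublocale coupling \<subseteq> Zt_law: finite_borel_measure "distr \<gamma> borel (Zt t)"
  by (intro finite_borel_measure.intro finite_borel_measure_axioms.intro prob_space.axioms(1)
      prob_space_distr) (simp_all add: measurable_cong_sets[OF sets_eq_borel refl])

context coupling
begin

lemma integral_Zt_law:
  "f \<in> borel_measurable borel \<Longrightarrow> (\<integral>z. f z \<partial>distr \<gamma> borel (Zt t)) = (\<integral>\<omega>. f (Zt t \<omega>) \<partial>\<gamma>)"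
  for f :: "real^'n \<Rightarrow> real"
  by (rule integral_distr) simp_all

lemma integrable_Zt_law:
  "f \<in> borel_measurable borel \<Longrightarrow> integrable (distr \<gamma> borel (Zt t)) f \<longleftrightarrow> integrable \<gamma> (\<lambda>\<omega>. f (Zt t \<omega>))"
  for f :: "real^'n \<Rightarrow> 'b::{banach, second_countable_topology}"
  by (rule integrable_distr_eq) simp_all

lemma square_integrable_vstar_component: "Zt_law.square_integrable (\<lambda>z. vstar z $ i)"
  using integrable_vstar_component_square by (simp add: Zt_law.square_integrable_def integrable_Zt_law)

lemma integrable_vstar_Zt_law: "integrable (distr \<gamma> borel (Zt t)) vstar"
  using integrable_of_norm_square[OF _ integrable_norm_vstar_square] by (simp add: integrable_Zt_law)

lemma Zt_law_invariant:
  fixes g :: "real^'n^'n"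
  assumes "distr \<gamma> borel (diagonal_action g) = \<gamma>"
  shows "distr (distr \<gamma> borel (Zt t)) borel ((*v) g) = distr \<gamma> borel (Zt t)"
proof -
  have "distr (distr \<gamma> borel (Zt t)) borel ((*v) g) = distr \<gamma> borel ((*v) g \<circ> Zt t)"
    by (intro distr_distr) measurable
  also have "(*v) g \<circ> Zt t = Zt t \<circ> diagonal_action g"
    by (simp add: fun_eq_iff Zt_diagonal_action)
  also have "distr \<gamma> borel (Zt t \<circ> diagonal_action g) = distr (distr \<gamma> borel (diagonal_action g)) borel (Zt t)"
    by (intro distr_distr[symmetric]) measurable
  finally show ?thesis
    by (simp add: assms)
qed

lemma ball_avg_vstar_equivariant:
  fixes g :: "real^'n^'n"
  assumes g: "orthogonal_matrix g" and invariant: "distr \<gamma> borel (diagonal_action g) = \<gamma>"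
  shows "Zt_law.ball_avg r vstar (g *v z) = g *v Zt_law.ball_avg r vstar z"
  using Zt_law.ball_avg_equivariant[OF orthogonal_transformation_matrix_vector_mult[OF g]
      Zt_law_invariant[OF invariant] borel_measurable_vstar integrable_vstar_Zt_law
      vstar_equivariant_AE[OF g invariant]] .

lemma loss_ball_avg_vstar:
  "loss \<gamma> t (Zt_law.ball_avg (1 / Suc k) vstar)
    = ennreal ((\<Sum>i\<in>UNIV. Zt_law.L2_avg_error k (\<lambda>z. vstar z $ i)) + bayes_risk)"
proof -
  define V where "V = Zt_law.ball_avg (1 / Suc k) vstar"
  have [measurable]: "V \<in> borel_measurable borel"
    unfolding V_def by measurable
  have component: "V z $ i = Zt_law.ball_avg (1 / Suc k) (\<lambda>y. vstar y $ i) z" for z i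
    unfolding V_def by (rule Zt_law.ball_avg_component[OF integrable_vstar_Zt_law])
  have "Zt_law.square_integrable (\<lambda>z. V z $ i)" for i
    unfolding component using square_integrable_vstar_component
    by (rule Zt_law.square_integrable_ball_avg) simp
  then have "integrable \<gamma> (\<lambda>\<omega>. (V (Zt t \<omega>) $ i)\<^sup>2)" for i
    by (simp add: Zt_law.square_integrable_def integrable_Zt_law)
  then have "integrable \<gamma> (\<lambda>\<omega>. (norm (V (Zt t \<omega>)))\<^sup>2)"
    by (simp add: power2_norm_eq_sum_components)
  then have "loss \<gamma> t V = ennreal ((\<integral>\<omega>. (norm (V (Zt t \<omega>) - vstar (Zt t \<omega>)))\<^sup>2 \<partial>\<gamma>) + bayes_risk)"
    by (rule loss_eq_bayes_risk_plus[rotated]) simp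
  also have "(\<integral>\<omega>. (norm (V (Zt t \<omega>) - vstar (Zt t \<omega>)))\<^sup>2 \<partial>\<gamma>)
      = (\<integral>z. (\<Sum>i\<in>UNIV. (Zt_law.ball_avg (1 / Suc k) (\<lambda>y. vstar y $ i) z - vstar z $ i)\<^sup>2) \<partial>distr \<gamma> borel (Zt t))"
    by (subst integral_Zt_law) (simp_all add: power2_norm_eq_sum_components component)
  also have "\<dots> = (\<Sum>i\<in>UNIV. Zt_law.L2_avg_error k (\<lambda>z. vstar z $ i))"
    unfolding Zt_law.L2_avg_error_def
    using Zt_law.square_integrable_ball_avg_diff[OF square_integrable_vstar_component]
    by (intro Bochner_Integration.integral_sum) (simp add: Zt_law.square_integrable_def)
  finally show ?thesis
    by (simp add: V_def)
qed

lemma INF_loss_equivariant: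
  assumes G: "\<forall>g\<in>G. orthogonal_matrix g \<and> distr \<gamma> borel (diagonal_action g) = \<gamma>"
  shows "(INF v \<in> {v \<in> borel_measurable borel. equivariant G v}. loss \<gamma> t v) = ennreal bayes_risk"
proof (rule antisym)
  show "(INF v \<in> {v \<in> borel_measurable borel. equivariant G v}. loss \<gamma> t v) \<le> ennreal bayes_risk"
  proof (rule ennreal_le_epsilon)
    fix e :: real assume "e > 0"
    have "(\<lambda>k. \<Sum>i\<in>UNIV. Zt_law.L2_avg_error k (\<lambda>z. vstar z $ i)) \<longlonglongrightarrow> (\<Sum>i\<in>(UNIV::'n set). 0)"
      by (intro tendsto_sum Zt_law.L2_avg_error_tendsto square_integrable_vstar_component)
    then have "\<forall>\<^sub>F k in sequentially. (\<Sum>i\<in>UNIV. Zt_law.L2_avg_error k (\<lambda>z. vstar z $ i)) < e"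
      using \<open>e > 0\<close> by (intro order_tendstoD(2)) simp_all
    then obtain k where k: "(\<Sum>i\<in>UNIV. Zt_law.L2_avg_error k (\<lambda>z. vstar z $ i)) < e"
      by (auto simp: eventually_sequentially)
    have "equivariant G (Zt_law.ball_avg (1 / Suc k) vstar)"
      using G by (simp add: equivariant_def ball_avg_vstar_equivariant)
    then have "(INF v \<in> {v \<in> borel_measurable borel. equivariant G v}. loss \<gamma> t v)
        \<le> loss \<gamma> t (Zt_law.ball_avg (1 / Suc k) vstar)"
      by (intro INF_lower) simp
    also have "\<dots> \<le> ennreal (bayes_risk + e)"
      unfolding loss_ball_avg_vstar using k by (simp add: ennreal_leI)
    also have "\<dots> = ennreal bayes_risk + ennreal e"
      using \<open>e > 0\<close> by (simp add: ennreal_plus bayes_risk_def integral_nonneg_AE)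
    finally show "(INF v \<in> {v \<in> borel_measurable borel. equivariant G v}. loss \<gamma> t v)
        \<le> ennreal bayes_risk + ennreal e" .
  qed
  show "ennreal bayes_risk \<le> (INF v \<in> {v \<in> borel_measurable borel. equivariant G v}. loss \<gamma> t v)"
    by (rule INF_greatest) (simp add: bayes_risk_le_loss)
qed

end

theorem mainTheorem7:
  fixes G :: "(real^'n^'n) set"
    and \<gamma> :: "((real^'n) \<times> (real^'n)) measure"
    and t :: real
    and vstar :: "real^'n \<Rightarrow> real^'n"
  assumes "compact_orth_group G"
    and "prob_space \<gamma>"
    and "sets \<gamma> = sets borel"
    and "integrable \<gamma> (\<lambda>(x, y). (norm x)\<^sup>2)"
    and "integrable \<gamma> (\<lambda>(x, y). (norm y)\<^sup>2)"
    and "\<forall>g\<in>G. distr \<gamma> borel (\<lambda>(x, y). (g *v x, g *v y)) = \<gamma>"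
    and "t \<in> {0..1}"
    and "bayes_regressor \<gamma> t vstar"
  shows "(\<forall>g\<in>G. AE z in distr \<gamma> borel (Zt t). vstar (g *v z) = g *v vstar z)
    \<and> (INF v \<in> {v \<in> borel_measurable borel. equivariant G v}. loss \<gamma> t v)
        = (INF v \<in> borel_measurable borel. loss \<gamma> t v)
    \<and> (INF v \<in> borel_measurable borel. loss \<gamma> t v)
        = ennreal (\<integral>\<omega>. cond_var \<gamma> t \<omega> \<partial>\<gamma>)"
proof -
  \<comment> \<open>Neither \<open>t \<in> {0..1}\<close> nor compactness or the group structure of \<open>G\<close> is needed:
    each \<open>g \<in> G\<close> is used on its own, through its orthogonality and the invariance of \<open>\<gamma>\<close>.\<close>
  interpret coupling \<gamma> t vstar
    using assms(2-5,8) by (simp add: coupling_def coupling_axioms_def)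
  have G: "\<forall>g\<in>G. orthogonal_matrix g \<and> distr \<gamma> borel (diagonal_action g) = \<gamma>"
    using assms(1,6) by (simp add: compact_orth_group_def diagonal_action_def)
  show ?thesis
    using G vstar_equivariant_AE INF_loss_equivariant[OF G] INF_loss integral_cond_var by simp
qed

end
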